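(* Let $R$ be a discrete $\Gamma$-ring. For every multiplicative map $\phi:H\mathbb Z\to R$, the element $\phi((1,-1))\in R[2]$, where $(1,-1)\in H\mathbb Z[2]$, is a formal difference law in $R$. The assignment $\phi\mapsto\phi((1,-1))$ is a bijection from the set of multiplicative maps $H\mathbb Z\to R$ to the set of formal difference laws in $R$, with inverse given by sending a formal difference law $r$ to the unique multiplicative map with $\pm1_n\mapsto r^n$ for all $n$.
   Context: Let $[n]=\{0,1,\dots,n\}$, pointed at $0$. A $\Gamma$-space is a functor $F$ from the finite pointed sets $[n]$ (with pointed maps) to pointed simplicial sets with $F[0]$ a point; for a pointed map $f$ we write $f$ also for $F(f)$; $\Sigma_n$ acts on $F[n]$ via permutations of $\{1,\dots,n\}$. We identify $[n]\wedge[m]$ with $[nm]$ via $i\wedge j\mapsto (j-1)n+i$. A $\Gamma$-ring is a $\Gamma$-space $R$ with unit $1\in R[1]$ (image of the unit map $\eta$) and associative unital multiplication given by natural maps $R(K)\wedge R(L)\to R(K\wedge L)$, $p\wedge q\mapsto pq$; it is discrete if all $R(K)$ are sets; $0\in R[1]$ denotes the basepoint. For $x\in R[2]$, $x^k\in R[2^k]$ is the $k$-fold product. A multiplicative map of $\Gamma$-rings is a natural transformation preserving units and products. Maps: $p^n_i:[n]\to[n-1]$, $p^n_i(j)=j$ ($j<i$), $p^n_i(i)=0$, $p^n_i(j)=j-1$ ($j>i$); for $1\le i<j\le n$ and $1\le k\le n-1$, $s^n_{i,j,k}:[n]\to[n-1]$ sends $0\mapsto0$, $i,j\mapsto k$,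 and the remaining elements order-preservingly and bijectively onto $\{1,\dots,n-1\}\setminus\{k\}$; $d^n_j:[n-1]\to[n]$ is the order-preserving injection missing $j$. $H\mathbb{Z}$ is the $\Gamma$-ring with $H\mathbb{Z}(K)$ the reduced free abelian group on $K$, pointed maps acting by summing coefficients along fibres, unit the inclusion of generators, multiplication $(\sum a_k k)(\sum b_l l)=\sum a_kb_l (k\wedge l)$; $\pm1_n=(1,-1)^n\in H\mathbb{Z}[2^n]$. For $k\ge1$, split $\{1,\dots,2^k\}=A_+\sqcup A_-$ where $i\in A_+$ iff the binary expansion of $i-1$ has an even number of digits $1$. The special action of $\Sigma_{2^{k-1}}\times\Sigma_{2^{k-1}}$ on $F[2^k]$ is the action of the group of permutations of $\{1,\dots,2^k\}$ preserving $A_+$ and $A_-$. Let $\sigma$ be the nontrivial element of $\Sigma_2$. A formal difference law in $R$ is $r\in R[2]$ such that: (1) $p^2_2(r)=1$ and $s^2_{1,2,1}(r)=0$; (2) $p^2_1(r)\,r=r\,p^2_1(r)=\sigma(r)$ in $R[2]$; (3) for every $k\ge1$, $r^k$ is fixed under the special action; (4) for every $k\ge1$, all $1\le i<j\le 2^k$ with one of $i,j$ in $A_+$ and the other in $A_-$, and all $1\le l\le 2^k-1$: $s^{2^k}_{i,j,l}(r^k)=d^{2^k-1}_l\,p^{2^k-1}_i\,p^{2^k}_j(r^k)$. *)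

theory Defs
  imports "HOL-Combinatorics.Permutations"
begin

text \<open>Discrete Gamma-rings, on the skeleton of finite pointed sets [n] = {0,...,n}.
  A pointed map [n] -> [m] is a function f :: nat => nat with f 0 = 0 and
  f i <= m for i <= n (only its values on {0..n} matter).
  R[n] is the set gobj R n, with basepoint gbp R n; the action of f is gact R n m f;
  the product R[n] /\ R[m] -> R[n*m] is gmult R n m; the unit is gunit R.\<close>

record 'a gamma_ring =
  gobj  :: "nat \<Rightarrow> 'a set"
  gbp   :: "nat \<Rightarrow> 'a"
  gact  :: "nat \<Rightarrow> nat \<Rightarrow> (nat \<Rightarrow> nat) \<Rightarrow> 'a \<Rightarrow> 'a"
  gmult :: "nat \<Rightarrow> nat \<Rightarrow> 'a \<Rightarrow> 'a \<Rightarrow> 'a"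
  gunit :: "'a"

definition pmap :: "nat \<Rightarrow> nat \<Rightarrow> (nat \<Rightarrow> nat) \<Rightarrow> bool" where
  "pmap n m f \<longleftrightarrow> f 0 = 0 \<and> (\<forall>i\<le>n. f i \<le> m)"

text \<open>Smash product f /\ g : [n]/\[m] -> [n']/\[m'] under the identification
  [n]/\[m] = [nm], i /\ j |-> (j-1)n + i.\<close>
definition smash_map :: "nat \<Rightarrow> nat \<Rightarrow> (nat \<Rightarrow> nat) \<Rightarrow> (nat \<Rightarrow> nat) \<Rightarrow> nat \<Rightarrow> nat" where
  "smash_map n n' f g k =
     (if k = 0 then 0 else
      (let i = (k - 1) mod n + 1; j = (k - 1) div n + 1 in
       if f i = 0 \<or> g j = 0 then 0 else (g j - 1) * n' + f i))"

definition is_gamma_ring :: "'a gamma_ring \<Rightarrow> bool" where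
  "is_gamma_ring R \<longleftrightarrow>
     (\<forall>n. gbp R n \<in> gobj R n) \<and>
     gobj R 0 = {gbp R 0} \<and>
     (\<forall>n m f x. pmap n m f \<and> x \<in> gobj R n \<longrightarrow> gact R n m f x \<in> gobj R m) \<and>
     (\<forall>n m f. pmap n m f \<longrightarrow> gact R n m f (gbp R n) = gbp R m) \<and>
     (\<forall>n m f g x. pmap n m f \<and> (\<forall>i\<le>n. f i = g i) \<and> x \<in> gobj R n
        \<longrightarrow> gact R n m f x = gact R n m g x) \<and>
     (\<forall>n x. x \<in> gobj R n \<longrightarrow> gact R n n (\<lambda>i. i) x = x) \<and>
     (\<forall>n m k f g x. pmap n m f \<and> pmap m k g \<and> x \<in> gobj R n
        \<longrightarrow> gact R m k g (gact R n m f x) = gact R n k (g \<circ> f) x) \<and>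
     gunit R \<in> gobj R 1 \<and>
     (\<forall>n m x y. x \<in> gobj R n \<and> y \<in> gobj R m \<longrightarrow> gmult R n m x y \<in> gobj R (n * m)) \<and>
     (\<forall>n m y. y \<in> gobj R m \<longrightarrow> gmult R n m (gbp R n) y = gbp R (n * m)) \<and>
     (\<forall>n m x. x \<in> gobj R n \<longrightarrow> gmult R n m x (gbp R m) = gbp R (n * m)) \<and>
     (\<forall>n n' m m' f g x y. pmap n n' f \<and> pmap m m' g \<and> x \<in> gobj R n \<and> y \<in> gobj R m
        \<longrightarrow> gmult R n' m' (gact R n n' f x) (gact R m m' g y)
            = gact R (n * m) (n' * m') (smash_map n n' f g) (gmult R n m x y)) \<and>
     (\<forall>n m k x y z. x \<in> gobj R n \<and> y \<in> gobj R m \<and> z \<in> gobj R k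
        \<longrightarrow> gmult R (n * m) k (gmult R n m x y) z = gmult R n (m * k) x (gmult R m k y z)) \<and>
     (\<forall>n x. x \<in> gobj R n \<longrightarrow> gmult R 1 n (gunit R) x = x \<and> gmult R n 1 x (gunit R) = x)"

text \<open>Multiplicative maps (natural, pointed, unital, multiplicative), extensional:
  undefined outside the carriers.\<close>
definition mult_maps :: "'a gamma_ring \<Rightarrow> 'b gamma_ring \<Rightarrow> (nat \<Rightarrow> 'a \<Rightarrow> 'b) set" where
  "mult_maps R S = {\<phi>.
     (\<forall>n x. x \<in> gobj R n \<longrightarrow> \<phi> n x \<in> gobj S n) \<and>
     (\<forall>n x. x \<notin> gobj R n \<longrightarrow> \<phi> n x = undefined) \<and>
     (\<forall>n. \<phi> n (gbp R n) = gbp S n) \<and>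
     (\<forall>n m f x. pmap n m f \<and> x \<in> gobj R n \<longrightarrow> \<phi> m (gact R n m f x) = gact S n m f (\<phi> n x)) \<and>
     \<phi> 1 (gunit R) = gunit S \<and>
     (\<forall>n m x y. x \<in> gobj R n \<and> y \<in> gobj R m
        \<longrightarrow> \<phi> (n * m) (gmult R n m x y) = gmult S n m (\<phi> n x) (\<phi> m y))}"

definition HZ :: "(nat \<Rightarrow> int) gamma_ring" where
  "HZ = \<lparr> gobj = (\<lambda>n. {a. \<forall>i. (i = 0 \<or> n < i) \<longrightarrow> a i = 0}),
          gbp = (\<lambda>n. (\<lambda>_. 0)),
          gact = (\<lambda>n m f a. (\<lambda>k. if k = 0 \<or> m < k then 0
                                 else (\<Sum>i\<in>{i\<in>{1..n}. f i = k}. a i))),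
          gmult = (\<lambda>n m a b. (\<lambda>k. if k = 0 \<or> n * m < k then 0
                                 else a ((k - 1) mod n + 1) * b ((k - 1) div n + 1))),
          gunit = (\<lambda>k. if k = 1 then 1 else 0) \<rparr>"

definition pm1 :: "nat \<Rightarrow> int" where
  "pm1 = (\<lambda>k. if k = 1 then 1 else if k = 2 then -1 else 0)"

fun gpow :: "'a gamma_ring \<Rightarrow> 'a \<Rightarrow> nat \<Rightarrow> 'a" where
  "gpow R x 0 = gunit R"
| "gpow R x (Suc k) = gmult R (2 ^ k) 2 (gpow R x k) x"

definition p_map :: "nat \<Rightarrow> nat \<Rightarrow> nat \<Rightarrow> nat" where
  "p_map n i x = (if x < i then x else if x = i then 0 else x - 1)"

definition s_map :: "nat \<Rightarrow> nat \<Rightarrow> nat \<Rightarrow> nat \<Rightarrow> nat \<Rightarrow> nat" where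
  "s_map n i j k x =
     (if x = 0 then 0 else if x = i \<or> x = j then k else
      (let r = x - (if i < x then 1 else 0) - (if j < x then 1 else 0)
       in if r < k then r else r + 1))"

definition d_map :: "nat \<Rightarrow> nat \<Rightarrow> nat \<Rightarrow> nat" where
  "d_map n j x = (if x = 0 then 0 else if x < j then x else x + 1)"

definition swap12 :: "nat \<Rightarrow> nat" where
  "swap12 x = (if x = 1 then 2 else if x = 2 then 1 else x)"

fun bitcount :: "nat \<Rightarrow> nat" where
  "bitcount n = (if n = 0 then 0 else n mod 2 + bitcount (n div 2))"

definition Aplus :: "nat \<Rightarrow> nat set" where
  "Aplus k = {i \<in> {1..2 ^ k}. even (bitcount (i - 1))}"

definition Aminus :: "nat \<Rightarrow> nat set" where
  "Aminus k = {1..2 ^ k} - Aplus k"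

definition formal_difference_law :: "'a gamma_ring \<Rightarrow> 'a \<Rightarrow> bool" where
  "formal_difference_law R r \<longleftrightarrow>
     r \<in> gobj R 2 \<and>
     gact R 2 1 (p_map 2 2) r = gunit R \<and>
     gact R 2 1 (s_map 2 1 2 1) r = gbp R 1 \<and>
     gmult R 1 2 (gact R 2 1 (p_map 2 1) r) r = gact R 2 2 swap12 r \<and>
     gmult R 2 1 r (gact R 2 1 (p_map 2 1) r) = gact R 2 2 swap12 r \<and>
     (\<forall>k\<ge>1. \<forall>\<pi>. \<pi> permutes {1..2 ^ k} \<and> \<pi> ` Aplus k \<subseteq> Aplus k \<and> \<pi> ` Aminus k \<subseteq> Aminus k
        \<longrightarrow> gact R (2 ^ k) (2 ^ k) \<pi> (gpow R r k) = gpow R r k) \<and>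
     (\<forall>k\<ge>1. \<forall>i j l. 1 \<le> i \<and> i < j \<and> j \<le> 2 ^ k \<and>
        ((i \<in> Aplus k \<and> j \<in> Aminus k) \<or> (i \<in> Aminus k \<and> j \<in> Aplus k)) \<and>
        1 \<le> l \<and> l \<le> 2 ^ k - 1
        \<longrightarrow> gact R (2 ^ k) (2 ^ k - 1) (s_map (2 ^ k) i j l) (gpow R r k)
            = gact R (2 ^ k - 2) (2 ^ k - 1) (d_map (2 ^ k - 1) l)
                (gact R (2 ^ k - 1) (2 ^ k - 2) (p_map (2 ^ k - 1) i)
                  (gact R (2 ^ k) (2 ^ k - 1) (p_map (2 ^ k) j) (gpow R r k))))"

end

theory Submission
  imports Defs
begin

text \<open>
  Every element of HZ[n] has the form f_*((1,-1)^k) for a pointed map f: [2^k] -> [n]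
  (HZ_generated), so a multiplicative map phi is determined by r = phi(1,-1) through
  phi(f_*((1,-1)^k)) = f_*(r^k), and phi(1,-1) inherits the difference-law axioms from
  (1,-1), which is itself a difference law in HZ.  Conversely, for a difference law r the
  same formula defines a map (induced_map); the heart of the proof is that it is well
  defined (act_well_defined): if f_*((1,-1)^k) = g_*((1,-1)^l) in HZ, then
  f_*(r^k) = g_*(r^l).  Condition (1) lets us raise both maps to a common level;
  condition (4) cancels pairs of opposite sign in a fibre until every fibre lies in one
  sign class; two such maps with the same image in HZ differ by transpositions inside
  sign classes, which fix r^k by condition (3).  Multiplicativity of the induced map then
  follows from naturality of the products.
\<close>

lemma pmap_comp: "pmap n m f \<Longrightarrow> pmap m k g \<Longrightarrow> pmap n k (g \<circ> f)"
  by (simp add: pmap_def)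

lemma pmap_p_map: "1 \<le> i \<Longrightarrow> i \<le> N \<Longrightarrow> pmap N (N - 1) (p_map N i)"
  unfolding pmap_def p_map_def by auto

lemma pmap_d_map: "1 \<le> l \<Longrightarrow> l \<le> M \<Longrightarrow> pmap (M - 1) M (d_map M l)"
  unfolding pmap_def d_map_def by auto

lemma pmap_s_map:
  "1 \<le> i \<Longrightarrow> i < j \<Longrightarrow> j \<le> N \<Longrightarrow> 1 \<le> l \<Longrightarrow> l \<le> N - 1 \<Longrightarrow> pmap N (N - 1) (s_map N i j l)"
  unfolding pmap_def s_map_def Let_def by auto

lemma pair_index_eq_iff:
  fixes N a b k :: nat
  assumes "0 < N" "1 \<le> a" "a \<le> N" "1 \<le> b"
  shows "(b - 1) * N + a = k \<longleftrightarrow> 1 \<le> k \<and> a = (k - 1) mod N + 1 \<and> b = (k - 1) div N + 1"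
proof
  assume k: "(b - 1) * N + a = k"
  then have km: "k - 1 = (a - 1) + (b - 1) * N" using assms by auto
  have "a - 1 < N" using assms by auto
  then have "(k - 1) mod N = a - 1" "(k - 1) div N = b - 1" using km by simp_all
  then show "1 \<le> k \<and> a = (k - 1) mod N + 1 \<and> b = (k - 1) div N + 1"
    using assms k by auto
next
  assume "1 \<le> k \<and> a = (k - 1) mod N + 1 \<and> b = (k - 1) div N + 1"
  then show "(b - 1) * N + a = k"
    using div_mult_mod_eq[of "k - 1" N] by auto
qed

lemma pair_index_bij:
  fixes n m :: nat
  assumes n: "0 < n"
  shows "bij_betw (\<lambda>z. ((z - 1) mod n + 1, (z - 1) div n + 1)) {1..n * m} ({1..n} \<times> {1..m})"
proof (rule bij_betw_byWitness[where f' = "\<lambda>(i, j). (j - 1) * n + i"])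
  show "\<forall>z\<in>{1..n * m}. (\<lambda>(i, j). (j - 1) * n + i) ((z - 1) mod n + 1, (z - 1) div n + 1) = z"
    using n by (auto simp: pair_index_eq_iff)
  show "\<forall>p\<in>{1..n} \<times> {1..m}.
          (\<lambda>z. ((z - 1) mod n + 1, (z - 1) div n + 1)) ((\<lambda>(i, j). (j - 1) * n + i) p) = p"
  proof
    fix p assume "p \<in> {1..n} \<times> {1..m}"
    then obtain i j where "p = (i, j)" "1 \<le> i" "i \<le> n" "1 \<le> j" by auto
    then show "(\<lambda>z. ((z - 1) mod n + 1, (z - 1) div n + 1)) ((\<lambda>(i, j). (j - 1) * n + i) p) = p"
      using pair_index_eq_iff[OF n, of i j "(j - 1) * n + i"] by simp
  qed
  have "(z - 1) div n < m" if "1 \<le> z" "z \<le> n * m" for z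
    using that by (simp add: less_mult_imp_div_less mult.commute)
  then show "(\<lambda>z. ((z - 1) mod n + 1, (z - 1) div n + 1)) ` {1..n * m} \<subseteq> {1..n} \<times> {1..m}"
    using n by (auto simp: Suc_le_eq)
  have "(j - 1) * n + i \<le> n * m" if "i \<le> n" "1 \<le> j" "j \<le> m" for i j
  proof -
    have "(j - 1) * n + i \<le> j * n" using that by (cases j) auto
    also have "\<dots> \<le> n * m" using that by simp
    finally show ?thesis .
  qed
  then show "(\<lambda>(i, j). (j - 1) * n + i) ` ({1..n} \<times> {1..m}) \<subseteq> {1..n * m}"
    by auto
qed

lemma pmap_smash:
  assumes f: "pmap n n' f" and g: "pmap m m' g"
  shows "pmap (n * m) (n' * m') (smash_map n n' f g)"
  unfolding pmap_def
proof (intro conjI allI impI)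
  show "smash_map n n' f g 0 = 0" by (simp add: smash_map_def)
  fix z assume z: "z \<le> n * m"
  show "smash_map n n' f g z \<le> n' * m'"
  proof (cases "z = 0")
    case False
    then have "0 < n" using z by (cases n) auto
    then obtain i j where ij: "((z - 1) mod n + 1, (z - 1) div n + 1) = (i, j)" "i \<le> n" "j \<le> m"
      using bij_betw_apply[OF pair_index_bij, of n z m] z False by auto
    then have "f i \<le> n'" "g j \<le> m'" using f g by (auto simp: pmap_def)
    then have "(g j - 1) * n' + f i \<le> m' * n'" if "g j \<noteq> 0"
      using that mult_le_mono1[of "g j" m' n'] by (cases "g j") auto
    moreover have "smash_map n n' f g z = (if f i = 0 \<or> g j = 0 then 0 else (g j - 1) * n' + f i)"
      using False ij(1) by (auto simp: smash_map_def Let_def)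
    ultimately show ?thesis by (simp add: mult.commute)
  qed (simp add: smash_map_def)
qed

lemma smash_counit_map:
  assumes "0 < N" "x \<le> 2 * N"
  shows "smash_map N N (\<lambda>i. i) (p_map 2 2) x = (if x \<le> N then x else 0)"
proof (cases "x = 0")
  case False
  have "(x - 1) div N = (if x \<le> N then 0 else 1)"
    using assms False by (auto simp: div_if le_div_geq)
  moreover have "(x - 1) mod N + 1 = x" if "x \<le> N"
    using that False by simp
  ultimately show ?thesis
    using False by (auto simp: smash_map_def Let_def p_map_def)
qed (simp add: smash_map_def)

text \<open>A map f with f i = f j factors through the map s_map N i j 1 identifying i and j
  (and moving them to the point 1); merge_factor f i j is the induced map.\<close>
definition skip_two :: "nat \<Rightarrow> nat \<Rightarrow> nat \<Rightarrow> nat" where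
  "skip_two i j y = (if y < i then y else if y + 1 < j then y + 1 else y + 2)"

definition merge_factor :: "(nat \<Rightarrow> nat) \<Rightarrow> nat \<Rightarrow> nat \<Rightarrow> nat \<Rightarrow> nat" where
  "merge_factor f i j y = (if y = 0 then 0 else if y = 1 then f i else f (skip_two i j (y - 1)))"

lemma pmap_merge_factor:
  "pmap N n f \<Longrightarrow> 1 \<le> i \<Longrightarrow> i < j \<Longrightarrow> j \<le> N \<Longrightarrow> pmap (N - 1) n (merge_factor f i j)"
  unfolding pmap_def merge_factor_def skip_two_def by auto

lemma merge_factor_s_map:
  "x \<le> N \<Longrightarrow> 1 \<le> i \<Longrightarrow> i < j \<Longrightarrow> j \<le> N \<Longrightarrow> f i = f j \<Longrightarrow> f 0 = 0
   \<Longrightarrow> merge_factor f i j (s_map N i j 1 x) = f x"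
  unfolding merge_factor_def s_map_def skip_two_def Let_def
  by (cases "x = 0"; cases "x = i"; cases "x = j"; cases "x < i"; cases "x < j") (auto simp: Suc_diff_Suc)

lemma merge_factor_deletion:
  "x \<le> N \<Longrightarrow> 1 \<le> i \<Longrightarrow> i < j \<Longrightarrow> j \<le> N \<Longrightarrow> f 0 = 0
   \<Longrightarrow> merge_factor f i j (d_map (N - 1) 1 (p_map (N - 1) i (p_map N j x)))
       = (if x = i \<or> x = j then 0 else f x)"
  unfolding merge_factor_def d_map_def p_map_def skip_two_def
  by (cases "x = 0"; cases "x = i"; cases "x = j"; cases "x < i"; cases "x < j") (auto simp: Suc_diff_Suc)

lemma s_map_eq_deletion:
  assumes "x \<le> N" "1 \<le> i" "i < j" "j \<le> N" "x \<noteq> i" "x \<noteq> j" "1 \<le> l"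
  shows "s_map N i j l x = d_map (N - 1) l (p_map (N - 1) i (p_map N j x))"
  using assms unfolding s_map_def d_map_def p_map_def Let_def
  by (cases "x = 0"; cases "x < i"; cases "x < j") auto

lemma deletion_kills_pair:
  "1 \<le> i \<Longrightarrow> i < j \<Longrightarrow> x = i \<or> x = j \<Longrightarrow> d_map (N - 1) l (p_map (N - 1) i (p_map N j x)) = 0"
  unfolding d_map_def p_map_def by auto

locale discrete_gamma_ring =
  fixes R :: "'a gamma_ring"
  assumes gamma_ring: "is_gamma_ring R"
begin

lemma obj_zero: "gobj R 0 = {gbp R 0}"
  using gamma_ring unfolding is_gamma_ring_def by auto

lemma act_in: "pmap n m f \<Longrightarrow> x \<in> gobj R n \<Longrightarrow> gact R n m f x \<in> gobj R m"
  using gamma_ring unfolding is_gamma_ring_def by auto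

lemma act_bp: "pmap n m f \<Longrightarrow> gact R n m f (gbp R n) = gbp R m"
  using gamma_ring unfolding is_gamma_ring_def by auto

lemma act_cong: "pmap n m f \<Longrightarrow> (\<And>i. i \<le> n \<Longrightarrow> f i = g i) \<Longrightarrow> x \<in> gobj R n
                    \<Longrightarrow> gact R n m f x = gact R n m g x"
  using gamma_ring unfolding is_gamma_ring_def by auto

lemma act_id: "x \<in> gobj R n \<Longrightarrow> gact R n n (\<lambda>i. i) x = x"
  using gamma_ring unfolding is_gamma_ring_def by auto

lemma act_comp: "pmap n m f \<Longrightarrow> pmap m k g \<Longrightarrow> x \<in> gobj R n
                    \<Longrightarrow> gact R m k g (gact R n m f x) = gact R n k (g \<circ> f) x"
  using gamma_ring unfolding is_gamma_ring_def by auto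

lemma unit_in: "gunit R \<in> gobj R 1"
  using gamma_ring unfolding is_gamma_ring_def by auto

lemma mult_in: "x \<in> gobj R n \<Longrightarrow> y \<in> gobj R m \<Longrightarrow> gmult R n m x y \<in> gobj R (n * m)"
  using gamma_ring unfolding is_gamma_ring_def by auto

lemma mult_natural: "pmap n n' f \<Longrightarrow> pmap m m' g \<Longrightarrow> x \<in> gobj R n \<Longrightarrow> y \<in> gobj R m
                    \<Longrightarrow> gmult R n' m' (gact R n n' f x) (gact R m m' g y)
                        = gact R (n * m) (n' * m') (smash_map n n' f g) (gmult R n m x y)"
  using gamma_ring unfolding is_gamma_ring_def by auto

lemma mult_assoc: "x \<in> gobj R n \<Longrightarrow> y \<in> gobj R m \<Longrightarrow> z \<in> gobj R k
                    \<Longrightarrow> gmult R (n * m) k (gmult R n m x y) z = gmult R n (m * k) x (gmult R m k y z)"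
  using gamma_ring unfolding is_gamma_ring_def by auto

lemma unit_left: "x \<in> gobj R n \<Longrightarrow> gmult R 1 n (gunit R) x = x"
  using gamma_ring unfolding is_gamma_ring_def by auto

lemma unit_right: "x \<in> gobj R n \<Longrightarrow> gmult R n 1 x (gunit R) = x"
  using gamma_ring unfolding is_gamma_ring_def by auto

lemma gpow_in: "r \<in> gobj R 2 \<Longrightarrow> gpow R r k \<in> gobj R (2 ^ k)"
proof (induction k)
  case 0
  show ?case using unit_in by simp
next
  case (Suc k)
  then show ?case using mult_in[of "gpow R r k" "2 ^ k" r 2] by (simp add: mult.commute)
qed

lemma gpow_one: "r \<in> gobj R 2 \<Longrightarrow> gpow R r 1 = r"
  using unit_left[of r 2] by simp

lemma gpow_add:
  assumes r: "r \<in> gobj R 2"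
  shows "gpow R r (k + l) = gmult R (2 ^ k) (2 ^ l) (gpow R r k) (gpow R r l)"
proof (induction l)
  case 0
  show ?case using unit_right gpow_in[OF r] by simp
next
  case (Suc l)
  have "gpow R r (k + Suc l) = gmult R (2 ^ k * 2 ^ l) 2 (gpow R r (k + l)) r"
    by (simp add: power_add)
  also have "\<dots> = gmult R (2 ^ k * 2 ^ l) 2 (gmult R (2 ^ k) (2 ^ l) (gpow R r k) (gpow R r l)) r"
    using Suc by simp
  also have "\<dots> = gmult R (2 ^ k) (2 ^ l * 2) (gpow R r k) (gmult R (2 ^ l) 2 (gpow R r l) r)"
    using mult_assoc gpow_in r by blast
  finally show ?case by (simp add: mult.commute)
qed

end

lemma HZ_simps:
  "gobj HZ n = {a. \<forall>i. (i = 0 \<or> n < i) \<longrightarrow> a i = 0}"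
  "gbp HZ n = (\<lambda>_. 0)"
  "gact HZ n m f a = (\<lambda>k. if k = 0 \<or> m < k then 0 else (\<Sum>i\<in>{i\<in>{1..n}. f i = k}. a i))"
  "gmult HZ n m a b = (\<lambda>k. if k = 0 \<or> n * m < k then 0
                                 else a ((k - 1) mod n + 1) * b ((k - 1) div n + 1))"
  "gunit HZ = (\<lambda>k. if k = 1 then 1 else 0)"
  by (simp_all add: HZ_def)

text \<open>Functoriality of HZ: summing along the fibres of f and then of g is summing
  along the fibres of g o f.\<close>
lemma HZ_act_comp:
  assumes f: "pmap n m f" and g: "pmap m k g"
  shows "gact HZ m k g (gact HZ n m f a) = gact HZ n k (g \<circ> f) a"
proof
  fix t
  show "gact HZ m k g (gact HZ n m f a) t = gact HZ n k (g \<circ> f) a t"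
  proof (cases "t = 0 \<or> k < t")
    case True
    then show ?thesis by (simp add: HZ_simps)
  next
    case False
    have "f i \<in> {j \<in> {1..m}. g j = t}" if "i \<in> {1..n}" "g (f i) = t" for i
      using that False f g unfolding pmap_def by (cases "f i = 0") auto
    then have "(\<Sum>j\<in>{j\<in>{1..m}. g j = t}. \<Sum>i\<in>{i \<in> {i \<in> {1..n}. g (f i) = t}. f i = j}. a i)
          = (\<Sum>i\<in>{i \<in> {1..n}. g (f i) = t}. a i)"
      by (intro sum.group) auto
    moreover have "{i \<in> {i \<in> {1..n}. g (f i) = t}. f i = j} = {i\<in>{1..n}. f i = j}"
      if "g j = t" for j
      using that by auto
    ultimately show ?thesis
      using False by (simp add: HZ_simps)
  qed
qed

lemma smash_map_fibre:
  assumes f: "pmap n n' f" and g: "pmap m m' g" and "0 < n" "0 < n'"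
    and k: "1 \<le> k" and z: "z \<in> {1..n * m}"
  shows "smash_map n n' f g z = k \<longleftrightarrow>
           f ((z - 1) mod n + 1) = (k - 1) mod n' + 1 \<and> g ((z - 1) div n + 1) = (k - 1) div n' + 1"
proof -
  obtain i j where ij: "((z - 1) mod n + 1, (z - 1) div n + 1) = (i, j)" "i \<in> {1..n}" "j \<in> {1..m}"
    using bij_betw_apply[OF pair_index_bij[OF \<open>0 < n\<close>] z] by auto
  have "smash_map n n' f g z = (if f i = 0 \<or> g j = 0 then 0 else (g j - 1) * n' + f i)"
    using z ij(1) by (auto simp: smash_map_def)
  moreover have "f i \<le> n'" "g j \<le> m'" using f g ij unfolding pmap_def by auto
  ultimately show ?thesis
    using pair_index_eq_iff[OF \<open>0 < n'\<close>, of "f i" "g j" k] k ij by auto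
qed

lemma smash_fibre_sum:
  fixes x y :: "nat \<Rightarrow> int"
  assumes f: "pmap n n' f" and g: "pmap m m' g" and n: "0 < n" and n': "0 < n'" and k: "1 \<le> k"
  shows "(\<Sum>z\<in>{z\<in>{1..n * m}. smash_map n n' f g z = k}. x ((z - 1) mod n + 1) * y ((z - 1) div n + 1))
       = (\<Sum>i\<in>{i\<in>{1..n}. f i = (k - 1) mod n' + 1}. x i) * (\<Sum>j\<in>{j\<in>{1..m}. g j = (k - 1) div n' + 1}. y j)"
proof -
  define \<pi> where "\<pi> = (\<lambda>z::nat. ((z - 1) mod n + 1, (z - 1) div n + 1))"
  define Z where "Z = {z\<in>{1..n * m}. smash_map n n' f g z = k}"
  define I where "I = {i\<in>{1..n}. f i = (k - 1) mod n' + 1}"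
  define J where "J = {j\<in>{1..m}. g j = (k - 1) div n' + 1}"
  have bij: "bij_betw \<pi> {1..n * m} ({1..n} \<times> {1..m})"
    using pair_index_bij[OF n] unfolding \<pi>_def .
  have Z: "Z = {z \<in> {1..n * m}. \<pi> z \<in> I \<times> J}"
    using smash_map_fibre[OF f g n n' k] bij_betw_apply[OF bij]
    by (auto simp: Z_def I_def J_def \<pi>_def)
  have "\<pi> ` Z = I \<times> J"
  proof
    show "\<pi> ` Z \<subseteq> I \<times> J" using Z by auto
    show "I \<times> J \<subseteq> \<pi> ` Z"
    proof
      fix p assume p: "p \<in> I \<times> J"
      then have "p \<in> \<pi> ` {1..n * m}"
        using bij_betw_imp_surj_on[OF bij] by (auto simp: I_def J_def)
      then obtain z where z: "z \<in> {1..n * m}" "p = \<pi> z" by blast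
      then have "z \<in> Z" using p Z by simp
      then show "p \<in> \<pi> ` Z" using z(2) by (rule rev_image_eqI)
    qed
  qed
  moreover have "inj_on \<pi> Z"
    using bij_betw_imp_inj_on[OF bij] by (rule inj_on_subset) (auto simp: Z_def)
  ultimately have "(\<Sum>z\<in>Z. x (fst (\<pi> z)) * y (snd (\<pi> z))) = (\<Sum>p\<in>I \<times> J. x (fst p) * y (snd p))"
    using sum.reindex[of \<pi> Z "\<lambda>p. x (fst p) * y (snd p)"] by simp
  also have "\<dots> = (\<Sum>i\<in>I. x i) * (\<Sum>j\<in>J. y j)"
    by (simp add: sum_product sum.cartesian_product split_def)
  finally show ?thesis unfolding Z_def I_def J_def \<pi>_def by simp
qed

lemma HZ_mult_natural:
  assumes f: "pmap n n' f" and g: "pmap m m' g"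
  shows "gmult HZ n' m' (gact HZ n n' f x) (gact HZ m m' g y)
            = gact HZ (n * m) (n' * m') (smash_map n n' f g) (gmult HZ n m x y)"
proof
  fix k
  show "gmult HZ n' m' (gact HZ n n' f x) (gact HZ m m' g y) k
      = gact HZ (n * m) (n' * m') (smash_map n n' f g) (gmult HZ n m x y) k"
  proof (cases "k = 0 \<or> n' * m' < k")
    case True
    then show ?thesis by (simp add: HZ_simps)
  next
    case False
    then have k: "1 \<le> k" "k \<le> n' * m'" by auto
    then have n': "0 < n'" by (cases n') auto
    have "((k - 1) mod n' + 1, (k - 1) div n' + 1) \<in> {1..n'} \<times> {1..m'}"
      using bij_betw_apply[OF pair_index_bij[OF n', of m'], of k] k by simp
    then have lhs: "gmult HZ n' m' (gact HZ n n' f x) (gact HZ m m' g y) k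
        = (\<Sum>i\<in>{i\<in>{1..n}. f i = (k - 1) mod n' + 1}. x i)
          * (\<Sum>j\<in>{j\<in>{1..m}. g j = (k - 1) div n' + 1}. y j)"
      using False by (simp add: HZ_simps)
    have rhs: "gact HZ (n * m) (n' * m') (smash_map n n' f g) (gmult HZ n m x y) k
        = (\<Sum>z\<in>{z\<in>{1..n * m}. smash_map n n' f g z = k}. x ((z - 1) mod n + 1) * y ((z - 1) div n + 1))"
      using False by (auto simp: HZ_simps intro!: sum.cong)
    show ?thesis
    proof (cases "n = 0")
      case True
      then show ?thesis using lhs rhs by simp
    next
      case False
      then show ?thesis using lhs rhs smash_fibre_sum[OF f g _ n' k(1), of x y] by simp
    qed
  qed
qed

lemma HZ_mult_assoc:
  "gmult HZ (n * m) k (gmult HZ n m x y) z = gmult HZ n (m * k) x (gmult HZ m k y z)"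
proof
  fix t
  show "gmult HZ (n * m) k (gmult HZ n m x y) z t = gmult HZ n (m * k) x (gmult HZ m k y z) t"
  proof (cases "t = 0 \<or> n * m * k < t")
    case True then show ?thesis by (auto simp: HZ_simps mult.assoc)
  next
    case False
    text \<open>Both sides are the product of the entries of x, y, z at the mixed-radix
      digits of t - 1.\<close>
    then have t: "1 \<le> t" "t \<le> n * m * k" by auto
    then have "n * m * k \<noteq> 0" by linarith
    then have n0: "0 < n" and m0: "0 < m" by auto
    define a where "a = t - 1"
    have a: "a < n * m * k" using t by (simp add: a_def)
    have u: "a mod (n * m) < n * m" using n0 m0 by simp
    have v: "a div n < m * k" using a by (metis less_mult_imp_div_less mult.assoc mult.commute)
    have e1: "a mod (n * m) mod n = a mod n" by (simp add: mod_mod_cancel)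
    have e2: "a mod (n * m) div n = a div n mod m" using n0 by (simp add: mod_mult2_eq)
    have e3: "a div (n * m) = a div n div m" by (simp add: div_mult2_eq)
    have L: "gmult HZ (n * m) k (gmult HZ n m x y) z t
       = x (a mod n + 1) * y (a div n mod m + 1) * z (a div n div m + 1)"
      using False u e1 e2 e3 by (simp add: HZ_simps a_def Suc_le_eq)
    have R: "gmult HZ n (m * k) x (gmult HZ m k y z) t
       = x (a mod n + 1) * (y (a div n mod m + 1) * z (a div n div m + 1))"
      using False v by (simp add: HZ_simps a_def Suc_le_eq mult.assoc)
    show ?thesis using L R by simp
  qed
qed

interpretation HZ: discrete_gamma_ring HZ
  unfolding discrete_gamma_ring_def is_gamma_ring_def
proof (intro conjI allI impI)
  fix n m f g and x :: "nat \<Rightarrow> int"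
  assume "pmap n m f \<and> (\<forall>i\<le>n. f i = g i) \<and> x \<in> gobj HZ n"
  then show "gact HZ n m f x = gact HZ n m g x"
    by (auto simp: HZ_simps intro!: sum.cong ext)
next
  fix n and x :: "nat \<Rightarrow> int"
  assume x: "x \<in> gobj HZ n"
  have "{i \<in> {1..n}. i = k} = {k}" if "1 \<le> k" "k \<le> n" for k
    using that by auto
  then show "gact HZ n n (\<lambda>i. i) x = x"
    using x by (auto simp: HZ_simps not_less)
  show "gmult HZ 1 n (gunit HZ) x = x"
    using x by (auto simp: HZ_simps)
  show "gmult HZ n 1 x (gunit HZ) = x"
  proof
    fix k
    have "(k - 1) mod n = k - 1" "(k - 1) div n = 0" if "1 \<le> k" "k \<le> n"
      using that by auto
    then show "gmult HZ n 1 x (gunit HZ) k = x k"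
      using x by (cases "k = 0 \<or> n < k") (auto simp: HZ_simps)
  qed
next
  fix n m k f g and x :: "nat \<Rightarrow> int"
  assume "pmap n m f \<and> pmap m k g \<and> x \<in> gobj HZ n"
  then show "gact HZ m k g (gact HZ n m f x) = gact HZ n k (g \<circ> f) x"
    by (simp add: HZ_act_comp)
next
  fix n n' m m' f g and x y :: "nat \<Rightarrow> int"
  assume "pmap n n' f \<and> pmap m m' g \<and> x \<in> gobj HZ n \<and> y \<in> gobj HZ m"
  then show "gmult HZ n' m' (gact HZ n n' f x) (gact HZ m m' g y)
            = gact HZ (n * m) (n' * m') (smash_map n n' f g) (gmult HZ n m x y)"
    by (simp add: HZ_mult_natural)
next
  fix n m k and x y z :: "nat \<Rightarrow> int"
  show "gmult HZ (n * m) k (gmult HZ n m x y) z = gmult HZ n (m * k) x (gmult HZ m k y z)"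
    by (rule HZ_mult_assoc)
qed (auto simp: HZ_simps)

text \<open>The powers of (1,-1) in HZ: (1,-1)^k is the vector of signs (-1)^(bitcount (x - 1))
  on [2^k], whose sign classes are exactly A+ and A-.\<close>

text \<open>The defining equation of bitcount loops as a rewrite rule; it is used only through
  the instances below.\<close>
declare bitcount.simps[simp del]

lemma bitcount_0[simp]: "bitcount 0 = 0"
  by (simp add: bitcount.simps[of 0])

lemma bitcount_step: "bitcount n = n mod 2 + bitcount (n div 2)"
  by (cases "n = 0") (simp_all add: bitcount.simps[of n])

lemma bitcount_pow_add: "r < 2 ^ k \<Longrightarrow> bitcount (2 ^ k + r) = Suc (bitcount r)"
proof (induction k arbitrary: r)
  case 0
  then show ?case by (simp add: bitcount_step[of "Suc 0"])
next
  case (Suc k)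
  have "(2 ^ Suc k + r) mod 2 = r mod 2" "(2 ^ Suc k + r) div 2 = 2 ^ k + r div 2"
    by simp_all
  then have "bitcount (2 ^ Suc k + r) = r mod 2 + bitcount (2 ^ k + r div 2)"
    by (metis bitcount_step)
  also have "\<dots> = Suc (bitcount r)"
    using Suc by (simp add: bitcount_step[of r])
  finally show ?case .
qed

definition sign_vec :: "nat \<Rightarrow> nat \<Rightarrow> int" where
  "sign_vec k x = (if x = 0 \<or> 2 ^ k < x then 0 else if even (bitcount (x - 1)) then 1 else -1)"

lemma sign_vec_in: "sign_vec k \<in> gobj HZ (2 ^ k)"
  by (simp add: HZ_simps sign_vec_def)

lemma sign_vec_cases: "x \<in> {1..2 ^ k} \<Longrightarrow> sign_vec k x = 1 \<or> sign_vec k x = -1"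
  by (simp add: sign_vec_def)

lemma Aplus_iff: "x \<in> Aplus k \<longleftrightarrow> x \<in> {1..2 ^ k} \<and> sign_vec k x = 1"
  by (auto simp: Aplus_def sign_vec_def)

lemma Aminus_iff: "x \<in> Aminus k \<longleftrightarrow> x \<in> {1..2 ^ k} \<and> sign_vec k x = -1"
  by (auto simp: Aminus_def Aplus_def sign_vec_def)

lemma sign_vec_Suc_high:
  assumes x: "x \<in> {1..2 ^ k}"
  shows "sign_vec (Suc k) (2 ^ k + x) = - sign_vec k x"
proof -
  have "x - 1 < 2 ^ k" "2 ^ k + x - 1 = 2 ^ k + (x - 1)"
    using x by auto
  then have bc: "bitcount (2 ^ k + x - 1) = Suc (bitcount (x - 1))"
    using bitcount_pow_add by metis
  have range: "\<not> (2 ^ k + x = 0 \<or> 2 ^ Suc k < 2 ^ k + x)" "\<not> (x = 0 \<or> 2 ^ k < x)"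
    using x by auto
  show ?thesis
    unfolding sign_vec_def if_not_P[OF range(1)] if_not_P[OF range(2)] bc by simp
qed

lemma gpow_HZ_pm1: "gpow HZ pm1 k = sign_vec k"
proof (induction k)
  case 0
  show ?case by (auto simp: HZ_simps sign_vec_def)
next
  case (Suc k)
  show ?case
  proof
    fix t
    show "gpow HZ pm1 (Suc k) t = sign_vec (Suc k) t"
    proof (cases "t = 0 \<or> 2 ^ Suc k < t")
      case True
      then show ?thesis by (auto simp: HZ_simps sign_vec_def mult.commute)
    next
      case False
      then have entry: "gpow HZ pm1 (Suc k) t
          = sign_vec k ((t - 1) mod 2 ^ k + 1) * pm1 ((t - 1) div 2 ^ k + 1)"
        using Suc.IH by (auto simp: HZ_simps mult.commute)
      show ?thesis
      proof (cases "t \<le> 2 ^ k")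
        case True
        then show ?thesis using entry False by (simp add: sign_vec_def pm1_def)
      next
        case high: False
        define x where "x = t - 2 ^ k"
        have x: "x \<in> {1..2 ^ k}" "t = 2 ^ k + x" using False high by (auto simp: x_def)
        have t1: "t - 1 = (x - 1) + 2 ^ k" and x1: "x - 1 < 2 ^ k"
          using x by auto
        have "(t - 1) mod 2 ^ k = x - 1" "(t - 1) div 2 ^ k = 1"
          unfolding t1 using x1 by (simp_all add: div_add_self2)
        then show ?thesis
          using entry x sign_vec_Suc_high[OF x(1)] by (auto simp: pm1_def)
      qed
    qed
  qed
qed

locale difference_law = discrete_gamma_ring +
  fixes r :: 'a
  assumes law: "formal_difference_law R r"
begin

lemma law_in: "r \<in> gobj R 2"
  using law unfolding formal_difference_law_def by blast

lemma law_counit: "gact R 2 1 (p_map 2 2) r = gunit R"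
  using law unfolding formal_difference_law_def by blast

lemma law_class_invariant:
  "1 \<le> k \<Longrightarrow> \<pi> permutes {1..2 ^ k} \<Longrightarrow> \<pi> ` Aplus k \<subseteq> Aplus k \<Longrightarrow> \<pi> ` Aminus k \<subseteq> Aminus k
   \<Longrightarrow> gact R (2 ^ k) (2 ^ k) \<pi> (gpow R r k) = gpow R r k"
  using law unfolding formal_difference_law_def by blast

lemma law_deletion:
  assumes "1 \<le> k" "1 \<le> i" "i < j" "j \<le> 2 ^ k"
    "(i \<in> Aplus k \<and> j \<in> Aminus k) \<or> (i \<in> Aminus k \<and> j \<in> Aplus k)" "1 \<le> l" "l \<le> 2 ^ k - 1"
  shows "gact R (2 ^ k) (2 ^ k - 1) (s_map (2 ^ k) i j l) (gpow R r k)
       = gact R (2 ^ k - 2) (2 ^ k - 1) (d_map (2 ^ k - 1) l)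
           (gact R (2 ^ k - 1) (2 ^ k - 2) (p_map (2 ^ k - 1) i)
             (gact R (2 ^ k) (2 ^ k - 1) (p_map (2 ^ k) j) (gpow R r k)))"
  using law assms unfolding formal_difference_law_def by blast

lemma power_in: "gpow R r k \<in> gobj R (2 ^ k)"
  using gpow_in[OF law_in] .

text \<open>Stabilization: since r has counit p_2(r) = 1, the action of f on r^k equals the
  action on r^(k+1) of f extended by the basepoint on the new half.\<close>
lemma act_power_Suc:
  assumes f: "pmap (2 ^ k) n f"
  shows "gact R (2 ^ k) n f (gpow R r k)
       = gact R (2 ^ Suc k) n (\<lambda>x. if x \<le> 2 ^ k then f x else 0) (gpow R r (Suc k))"
proof -
  define h where "h = smash_map (2 ^ k) (2 ^ k) (\<lambda>i. i) (p_map 2 2)"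
  have h: "h x = (if x \<le> 2 ^ k then x else 0)" if "x \<le> 2 ^ Suc k" for x
    using smash_counit_map[of "2 ^ k" x] that by (simp add: h_def)
  have ph: "pmap (2 ^ Suc k) (2 ^ k) h"
    unfolding pmap_def using h by (simp add: h_def smash_map_def)
  have "gmult R (2 ^ k) 1 (gact R (2 ^ k) (2 ^ k) (\<lambda>i. i) (gpow R r k)) (gact R 2 1 (p_map 2 2) r)
      = gact R (2 ^ k * 2) (2 ^ k * 1) h (gmult R (2 ^ k) 2 (gpow R r k) r)"
    unfolding h_def by (rule mult_natural) (auto simp: pmap_def p_map_def power_in law_in)
  then have "gpow R r k = gact R (2 ^ Suc k) (2 ^ k) h (gpow R r (Suc k))"
    using act_id[OF power_in] law_counit unit_right[OF power_in] by (simp add: mult.commute)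
  then have "gact R (2 ^ k) n f (gpow R r k) = gact R (2 ^ Suc k) n (f \<circ> h) (gpow R r (Suc k))"
    using act_comp[OF ph f power_in] by simp
  also have "\<dots> = gact R (2 ^ Suc k) n (\<lambda>x. if x \<le> 2 ^ k then f x else 0) (gpow R r (Suc k))"
    using f h by (intro act_cong[OF pmap_comp[OF ph f] _ power_in]) (simp add: pmap_def)
  finally show ?thesis .
qed

lemma act_power_stable:
  assumes f: "pmap (2 ^ k) n f"
  shows "gact R (2 ^ k) n f (gpow R r k)
       = gact R (2 ^ (k + m)) n (\<lambda>x. if x \<le> 2 ^ k then f x else 0) (gpow R r (k + m))"
proof (induction m)
  case 0
  show ?case using act_cong[OF f _ power_in, of "\<lambda>x. if x \<le> 2 ^ k then f x else 0"] by simp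
next
  case (Suc m)
  have "x \<le> 2 ^ (k + m)" if "x \<le> 2 ^ k" for x :: nat
    using that power_increasing[of k "k + m" "2::nat"] by linarith
  then have "(\<lambda>x. if x \<le> 2 ^ (k + m) then if x \<le> 2 ^ k then f x else 0 else 0)
      = (\<lambda>x. if x \<le> 2 ^ k then f x else 0)"
    by (auto simp: fun_eq_iff simp del: power_add)
  moreover have "pmap (2 ^ (k + m)) n (\<lambda>x. if x \<le> 2 ^ k then f x else 0)"
    using f by (auto simp: pmap_def)
  ultimately show ?case
    using Suc act_power_Suc[of "k + m" n "\<lambda>x. if x \<le> 2 ^ k then f x else 0"] by simp
qed

lemma act_transpose_same_sign:
  assumes x: "x \<in> {1..2 ^ k}" and y: "y \<in> {1..2 ^ k}" and s: "sign_vec k x = sign_vec k y"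
    and f: "pmap (2 ^ k) n f"
  shows "gact R (2 ^ k) n (f \<circ> transpose x y) (gpow R r k) = gact R (2 ^ k) n f (gpow R r k)"
proof (cases "x = y")
  case True
  then show ?thesis by simp
next
  case False
  then have k: "1 \<le> k" using x y by (cases k) auto
  let ?t = "transpose x y"
  have t_sign: "sign_vec k (?t z) = sign_vec k z" for z
    using s by (simp add: transpose_def)
  have perm: "?t permutes {1..2 ^ k}" by (rule permutes_swap_id[OF x y])
  have "?t z \<in> {1..2 ^ k} \<longleftrightarrow> z \<in> {1..2 ^ k}" for z
    using permutes_in_image[OF perm] by simp
  then have "?t ` Aplus k \<subseteq> Aplus k" "?t ` Aminus k \<subseteq> Aminus k"
    using t_sign by (auto simp: Aplus_iff Aminus_iff simp del: atLeastAtMost_iff)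
  then have "gact R (2 ^ k) (2 ^ k) ?t (gpow R r k) = gpow R r k"
    using law_class_invariant[OF k perm] by blast
  moreover have "pmap (2 ^ k) (2 ^ k) ?t"
    unfolding pmap_def using x y by (auto simp: transpose_def)
  ultimately show ?thesis
    using act_comp[OF _ f power_in] by metis
qed

text \<open>Factor f through the map s_map
  identifying them and use (4) with l = 1.\<close>
lemma act_merge_opposite:
  assumes f: "pmap (2 ^ k) n f" and ij: "1 \<le> i" "i < j" "j \<le> 2 ^ k"
    and s: "sign_vec k i \<noteq> sign_vec k j" and fij: "f i = f j"
  shows "gact R (2 ^ k) n f (gpow R r k)
       = gact R (2 ^ k) n (\<lambda>x. if x = i \<or> x = j then 0 else f x) (gpow R r k)"
proof -
  define N where "N = (2::nat) ^ k"
  have N: "2 \<le> N" "N - 1 - 1 = N - 2" using ij by (auto simp: N_def)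
  have k: "1 \<le> k" using ij by (cases k) auto
  have "(i \<in> Aplus k \<and> j \<in> Aminus k) \<or> (i \<in> Aminus k \<and> j \<in> Aplus k)"
    using s ij sign_vec_cases[of i k] sign_vec_cases[of j k] by (auto simp: Aplus_iff Aminus_iff)
  then have c4: "gact R N (N - 1) (s_map N i j 1) (gpow R r k)
            = gact R (N - 2) (N - 1) (d_map (N - 1) 1)
                (gact R (N - 1) (N - 2) (p_map (N - 1) i)
                  (gact R N (N - 1) (p_map N j) (gpow R r k)))"
    using law_deletion[OF k ij, of 1] N unfolding N_def by simp
  have fN: "pmap N n f" and xk: "gpow R r k \<in> gobj R N" and jN: "j \<le> N"
    using f power_in ij by (simp_all add: N_def)
  have ps: "pmap N (N - 1) (s_map N i j 1)" using pmap_s_map ij jN N by simp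
  have pj: "pmap N (N - 1) (p_map N j)" using pmap_p_map ij jN by simp
  have pi: "pmap (N - 1) (N - 2) (p_map (N - 1) i)" using pmap_p_map[of i "N - 1"] ij jN N by simp
  have pd: "pmap (N - 2) (N - 1) (d_map (N - 1) 1)" using pmap_d_map[of 1 "N - 1"] N by simp
  have pf: "pmap (N - 1) n (merge_factor f i j)" using pmap_merge_factor fN ij jN by blast
  have y1: "gact R N (N - 1) (p_map N j) (gpow R r k) \<in> gobj R (N - 1)"
    using act_in[OF pj xk] .
  have y2: "gact R (N - 1) (N - 2) (p_map (N - 1) i) (gact R N (N - 1) (p_map N j) (gpow R r k))
      \<in> gobj R (N - 2)" using act_in[OF pi y1] .
  have f0: "f 0 = 0" using f by (simp add: pmap_def)
  have "gact R N n f (gpow R r k) = gact R N n (merge_factor f i j \<circ> s_map N i j 1) (gpow R r k)"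
    using merge_factor_s_map[of _ N i j f] ij jN fij f0 by (intro act_cong[OF fN _ xk]) simp
  also have "\<dots> = gact R (N - 1) n (merge_factor f i j) (gact R N (N - 1) (s_map N i j 1) (gpow R r k))"
    using act_comp[OF ps pf xk] by simp
  also have "\<dots> = gact R (N - 2) n (merge_factor f i j \<circ> d_map (N - 1) 1)
        (gact R (N - 1) (N - 2) (p_map (N - 1) i) (gact R N (N - 1) (p_map N j) (gpow R r k)))"
    using c4 act_comp[OF pd pf y2] by simp
  also have "\<dots> = gact R N n (merge_factor f i j \<circ> d_map (N - 1) 1 \<circ> p_map (N - 1) i \<circ> p_map N j)
        (gpow R r k)"
    using act_comp[OF pi pmap_comp[OF pd pf] y1] act_comp[OF pj pmap_comp[OF pi pmap_comp[OF pd pf]] xk]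
    by (simp add: comp_assoc)
  also have "\<dots> = gact R N n (\<lambda>x. if x = i \<or> x = j then 0 else f x) (gpow R r k)"
    using merge_factor_deletion[of _ N i j f] pmap_comp[OF pj pmap_comp[OF pi pmap_comp[OF pd pf]]] ij jN f0
    by (intro act_cong[OF _ _ xk]) (simp_all add: comp_assoc)
  finally show ?thesis unfolding N_def .
qed

end

lemma HZ_act_drop_pair:
  assumes ij: "i \<noteq> j" "i \<in> {1..N}" "j \<in> {1..N}"
    and same: "\<And>x. x \<in> {1..N} \<Longrightarrow> x \<noteq> i \<Longrightarrow> x \<noteq> j \<Longrightarrow> f x = g x"
    and fij: "f i = f j" and gij: "g i = 0" "g j = 0"
    and v: "v i + v j = 0"
  shows "gact HZ N M f v = gact HZ N M g v"
proof
  fix t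
  show "gact HZ N M f v t = gact HZ N M g v t"
  proof (cases "t = 0 \<or> M < t")
    case True
    then show ?thesis by (simp add: HZ_simps)
  next
    case False
    define S where "S = {x\<in>{1..N}. g x = t}"
    have S: "S = {x\<in>{1..N}. f x = t} - {i, j}"
    proof (rule set_eqI)
      fix x
      have "x \<in> S \<Longrightarrow> x \<noteq> i \<and> x \<noteq> j" using gij False by (auto simp: S_def)
      then show "x \<in> S \<longleftrightarrow> x \<in> {x\<in>{1..N}. f x = t} - {i, j}"
        using same by (auto simp: S_def)
    qed
    show ?thesis
    proof (cases "f i = t")
      case True
      then have "{x\<in>{1..N}. f x = t} = insert i (insert j S)"
        using S fij ij by auto
      moreover have "i \<notin> S" "j \<notin> S" "finite S" using S by auto
      ultimately have "(\<Sum>x\<in>{x\<in>{1..N}. f x = t}. v x) = (\<Sum>x\<in>S. v x)"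
        using ij v by simp
      then show ?thesis using False by (simp add: HZ_simps S_def)
    next
      case False
      then have "{x\<in>{1..N}. f x = t} = S" using S fij by auto
      then show ?thesis using \<open>\<not> (t = 0 \<or> M < t)\<close> by (simp add: HZ_simps S_def)
    qed
  qed
qed

lemma sum_over_two:
  "(\<Sum>i\<in>{i\<in>{1..2::nat}. P i}. a i) = (if P 1 then a 1 else 0) + (if P 2 then (a 2 :: int) else 0)"
proof -
  have "{i\<in>{1..2::nat}. P i} = (if P 1 then {1} else {}) \<union> (if P 2 then {2} else {})"
    by (auto simp: le_Suc_eq numeral_2_eq_2)
  then show ?thesis by auto
qed

lemma HZ_act_permutation:
  assumes perm: "\<pi> permutes {1..N}" and v: "v \<in> gobj HZ N"
    and inv: "\<And>x. x \<in> {1..N} \<Longrightarrow> v (\<pi> x) = v x"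
  shows "gact HZ N N \<pi> v = v"
proof
  fix t
  show "gact HZ N N \<pi> v t = v t"
  proof (cases "t \<in> {1..N}")
    case True
    then obtain w where w: "w \<in> {1..N}" "\<pi> w = t"
      using permutes_image[OF perm] by (metis imageE)
    then have "{i \<in> {1..N}. \<pi> i = t} = {w}"
      using inj_onD[OF permutes_inj_on[OF perm]] by auto
    moreover have "v w = v t" using inv[OF w(1)] w(2) by simp
    ultimately show ?thesis using True by (simp add: HZ_simps)
  next
    case False
    then have "t = 0 \<or> N < t" by auto
    then show ?thesis using v by (auto simp: HZ_simps)
  qed
qed

lemma sign_vec_permutes:
  assumes perm: "\<pi> permutes {1..2 ^ k}" and classes: "\<pi> ` Aplus k \<subseteq> Aplus k" "\<pi> ` Aminus k \<subseteq> Aminus k"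
    and w: "w \<in> {1..2 ^ k}"
  shows "sign_vec k (\<pi> w) = sign_vec k w"
proof (cases "sign_vec k w = 1")
  case True
  then have "w \<in> Aplus k" using w by (simp add: Aplus_iff)
  then have "\<pi> w \<in> Aplus k" using classes(1) by blast
  then show ?thesis using True by (simp add: Aplus_iff)
next
  case False
  then have "w \<in> Aminus k" using w sign_vec_cases[OF w] by (simp add: Aminus_iff)
  then have "\<pi> w \<in> Aminus k" using classes(2) by blast
  then show ?thesis using False sign_vec_cases[OF w] by (simp add: Aminus_iff)
qed

lemma HZ_act_deletion:
  assumes ij: "1 \<le> i" "i < j" "j \<le> N" and l: "1 \<le> l" "l \<le> N - 1" and v: "v i + v j = 0"
  shows "gact HZ N (N - 1) (s_map N i j l) v
       = gact HZ (N - 2) (N - 1) (d_map (N - 1) l)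
           (gact HZ (N - 1) (N - 2) (p_map (N - 1) i) (gact HZ N (N - 1) (p_map N j) v))"
proof -
  have N: "N - 1 - 1 = N - 2" by simp
  have pj: "pmap N (N - 1) (p_map N j)" using pmap_p_map ij by simp
  have pi: "pmap (N - 1) (N - 2) (p_map (N - 1) i)" using pmap_p_map[of i "N - 1"] ij N by simp
  have pd: "pmap (N - 2) (N - 1) (d_map (N - 1) l)" using pmap_d_map[of l "N - 1"] l N by simp
  have "gact HZ N (N - 1) (s_map N i j l) v
      = gact HZ N (N - 1) (d_map (N - 1) l \<circ> p_map (N - 1) i \<circ> p_map N j) v"
  proof (rule HZ_act_drop_pair)
    show "i \<noteq> j" "i \<in> {1..N}" "j \<in> {1..N}" using ij by auto
    show "s_map N i j l x = (d_map (N - 1) l \<circ> p_map (N - 1) i \<circ> p_map N j) x"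
      if "x \<in> {1..N}" "x \<noteq> i" "x \<noteq> j" for x
      using that s_map_eq_deletion ij l by simp
    show "s_map N i j l i = s_map N i j l j" using ij by (simp add: s_map_def)
    show "(d_map (N - 1) l \<circ> p_map (N - 1) i \<circ> p_map N j) i = 0"
      "(d_map (N - 1) l \<circ> p_map (N - 1) i \<circ> p_map N j) j = 0"
      using deletion_kills_pair ij by auto
  qed (rule v)
  also have "\<dots> = gact HZ (N - 2) (N - 1) (d_map (N - 1) l)
           (gact HZ (N - 1) (N - 2) (p_map (N - 1) i) (gact HZ N (N - 1) (p_map N j) v))"
    using HZ_act_comp[OF pi pd] HZ_act_comp[OF pj pmap_comp[OF pi pd]] by (simp add: comp_assoc)
  finally show ?thesis .
qed

text \<open>(1,-1) is a formal difference law in HZ: conditions (1) and (2) are computations in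
  HZ[1] and HZ[2], and (3), (4) hold because the powers of (1,-1) are the sign vectors.\<close>
lemma HZ_difference_law: "formal_difference_law HZ pm1"
  unfolding formal_difference_law_def gpow_HZ_pm1
proof (intro conjI allI impI)
  show "pm1 \<in> gobj HZ 2" by (simp add: HZ_simps pm1_def)
  show "gact HZ 2 1 (p_map 2 2) pm1 = gunit HZ"
    unfolding HZ_simps sum_over_two by (auto simp: p_map_def pm1_def)
  show "gact HZ 2 1 (s_map 2 1 2 1) pm1 = gbp HZ 1"
    unfolding HZ_simps sum_over_two by (auto simp: s_map_def pm1_def)
  show "gmult HZ 1 2 (gact HZ 2 1 (p_map 2 1) pm1) pm1 = gact HZ 2 2 swap12 pm1"
    and "gmult HZ 2 1 pm1 (gact HZ 2 1 (p_map 2 1) pm1) = gact HZ 2 2 swap12 pm1"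
    unfolding HZ_simps sum_over_two fun_eq_iff
    by (auto simp: p_map_def pm1_def swap12_def le_Suc_eq numeral_2_eq_2)
next
  fix k :: nat and \<pi>
  assume "1 \<le> k" and "\<pi> permutes {1..2 ^ k} \<and> \<pi> ` Aplus k \<subseteq> Aplus k \<and> \<pi> ` Aminus k \<subseteq> Aminus k"
  then have perm: "\<pi> permutes {1..2 ^ k}" and "\<pi> ` Aplus k \<subseteq> Aplus k" "\<pi> ` Aminus k \<subseteq> Aminus k"
    by simp_all
  then show "gact HZ (2 ^ k) (2 ^ k) \<pi> (sign_vec k) = sign_vec k"
    by (intro HZ_act_permutation[OF perm sign_vec_in] sign_vec_permutes)
next
  fix k i j l :: nat
  assume "1 \<le> k" and h: "1 \<le> i \<and> i < j \<and> j \<le> 2 ^ k \<and>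
        (i \<in> Aplus k \<and> j \<in> Aminus k \<or> i \<in> Aminus k \<and> j \<in> Aplus k) \<and> 1 \<le> l \<and> l \<le> 2 ^ k - 1"
  then have "sign_vec k i + sign_vec k j = 0" by (auto simp: Aplus_iff Aminus_iff)
  then show "gact HZ (2 ^ k) (2 ^ k - 1) (s_map (2 ^ k) i j l) (sign_vec k)
      = gact HZ (2 ^ k - 2) (2 ^ k - 1) (d_map (2 ^ k - 1) l)
          (gact HZ (2 ^ k - 1) (2 ^ k - 2) (p_map (2 ^ k - 1) i)
            (gact HZ (2 ^ k) (2 ^ k - 1) (p_map (2 ^ k) j) (sign_vec k)))"
    using h by (intro HZ_act_deletion) simp_all
qed

interpretation HZ: difference_law HZ pm1
  by unfold_locales (rule HZ_difference_law)

lemma HZ_act_add_point: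
  assumes z: "z \<in> {1..N}" "f z = 0" and t: "t \<in> {1..n}"
  shows "gact HZ N n (f(z := t)) v = (\<lambda>s. gact HZ N n f v s + (if s = t then v z else 0))"
proof
  fix s
  show "gact HZ N n (f(z := t)) v s = gact HZ N n f v s + (if s = t then v z else 0)"
  proof (cases "s = 0 \<or> n < s")
    case True
    then show ?thesis using t by (cases "s = t") (auto simp: HZ_simps)
  next
    case s: False
    show ?thesis
    proof (cases "s = t")
      case True
      then have "{x\<in>{1..N}. (f(z := t)) x = s} = insert z {x\<in>{1..N}. f x = s}"
        "z \<notin> {x\<in>{1..N}. f x = s}"
        using z s by auto
      then show ?thesis using s True by (simp add: HZ_simps)
    next
      case False
      then have "{x\<in>{1..N}. (f(z := t)) x = s} = {x\<in>{1..N}. f x = s}"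
        using z s by auto
      then show ?thesis using s False by (simp add: HZ_simps)
    qed
  qed
qed

text \<open>Induction on the l1-norm of a: to add a sign e at t, stabilize to k+1 and send
  to t an unused point of the new half whose sign is e.\<close>
lemma HZ_generated:
  "a \<in> gobj HZ n \<Longrightarrow> \<exists>k f. 1 \<le> k \<and> pmap (2 ^ k) n f \<and> a = gact HZ (2 ^ k) n f (sign_vec k)"
proof (induction "\<Sum>t\<in>{1..n}. nat \<bar>a t\<bar>" arbitrary: a rule: less_induct)
  case less
  show ?case
  proof (cases "\<exists>t\<in>{1..n}. a t \<noteq> 0")
    case False
    have "a s = 0" for s
      using False less.prems by (cases "s = 0 \<or> n < s") (auto simp: HZ_simps)
    then have "a = (\<lambda>_. 0)" by auto
    moreover have "gact HZ (2 ^ 1) n (\<lambda>_. 0) (sign_vec 1) = (\<lambda>_. 0)" "pmap (2 ^ 1) n (\<lambda>_. 0)"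
      by (auto simp: HZ_simps pmap_def)
    ultimately show ?thesis by (metis order_refl)
  next
    case True
    then obtain t where t: "t \<in> {1..n}" "a t \<noteq> 0" by blast
    define e where "e = sgn (a t)"
    have e: "e = 1 \<or> e = -1" using t by (auto simp: e_def sgn_if)
    define a' where "a' = a(t := a t - e)"
    have "a' \<in> gobj HZ n" using less.prems t by (auto simp: HZ_simps a'_def)
    moreover have "(\<Sum>s\<in>{1..n}. nat \<bar>a' s\<bar>) < (\<Sum>s\<in>{1..n}. nat \<bar>a s\<bar>)"
    proof (rule sum_strict_mono_ex1)
      show "\<forall>s\<in>{1..n}. nat \<bar>a' s\<bar> \<le> nat \<bar>a s\<bar>"
        using t by (auto simp: a'_def e_def sgn_if)
      show "\<exists>s\<in>{1..n}. nat \<bar>a' s\<bar> < nat \<bar>a s\<bar>"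
        using t by (intro bexI[of _ t]) (auto simp: a'_def e_def sgn_if)
    qed simp
    ultimately obtain k f where kf: "1 \<le> k" "pmap (2 ^ k) n f" "a' = gact HZ (2 ^ k) n f (sign_vec k)"
      using less.hyps by blast
    define f' where "f' = (\<lambda>x. if x \<le> 2 ^ k then f x else 0)"
    have pf': "pmap (2 ^ Suc k) n f'" using kf by (auto simp: pmap_def f'_def)
    have a': "a' = gact HZ (2 ^ Suc k) n f' (sign_vec (Suc k))"
      using HZ.act_power_Suc[OF kf(2)] kf(3) unfolding gpow_HZ_pm1 f'_def by simp
    define z where "z = (if e = 1 then 2 ^ k + 2 else 2 ^ k + 1 :: nat)"
    have k2: "(2::nat) \<le> 2 ^ k" using kf(1) self_le_power[of 2 k] by simp
    have z: "z \<in> {1..2 ^ Suc k}" "f' z = 0" using k2 by (auto simp: z_def f'_def)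
    have "sign_vec k 1 = 1" "sign_vec k 2 = -1"
      using k2 bitcount_step[of 1] by (simp_all add: sign_vec_def)
    then have "sign_vec (Suc k) z = e"
      using e k2 sign_vec_Suc_high[of 1 k] sign_vec_Suc_high[of 2 k] by (auto simp: z_def)
    then have "gact HZ (2 ^ Suc k) n (f'(z := t)) (sign_vec (Suc k)) = (\<lambda>s. a' s + (if s = t then e else 0))"
      using HZ_act_add_point[of z "2 ^ Suc k" f' t n "sign_vec (Suc k)"] z t(1) a'
      by (simp cong: if_cong)
    also have "\<dots> = a" by (auto simp: a'_def)
    finally have "gact HZ (2 ^ Suc k) n (f'(z := t)) (sign_vec (Suc k)) = a" .
    moreover have "pmap (2 ^ Suc k) n (f'(z := t))" using pf' t z unfolding pmap_def by auto
    ultimately show ?thesis by (metis le_SucI kf(1))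
  qed
qed

lemma mult_mapD:
  assumes "\<phi> \<in> mult_maps HZ R"
  shows mult_map_in: "\<And>n x. x \<in> gobj HZ n \<Longrightarrow> \<phi> n x \<in> gobj R n"
    and mult_map_out: "\<And>n x. x \<notin> gobj HZ n \<Longrightarrow> \<phi> n x = undefined"
    and mult_map_bp: "\<And>n. \<phi> n (gbp HZ n) = gbp R n"
    and mult_map_act: "\<And>n m f x. pmap n m f \<Longrightarrow> x \<in> gobj HZ n
                          \<Longrightarrow> \<phi> m (gact HZ n m f x) = gact R n m f (\<phi> n x)"
    and mult_map_unit: "\<phi> 1 (gunit HZ) = gunit R"
    and mult_map_mult: "\<And>n m x y. x \<in> gobj HZ n \<Longrightarrow> y \<in> gobj HZ m
                          \<Longrightarrow> \<phi> (n * m) (gmult HZ n m x y) = gmult R n m (\<phi> n x) (\<phi> m y)"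
  using assms unfolding mult_maps_def by auto

lemma mult_map_gpow:
  assumes "\<phi> \<in> mult_maps HZ R"
  shows "\<phi> (2 ^ k) (gpow HZ pm1 k) = gpow R (\<phi> 2 pm1) k"
proof (induction k)
  case 0
  then show ?case using mult_map_unit[OF assms] by simp
next
  case (Suc k)
  then show ?case
    using mult_map_mult[OF assms HZ.power_in HZ.law_in, of k] by (simp add: mult.commute)
qed

lemma mult_map_act_power:
  assumes "\<phi> \<in> mult_maps HZ R" and f: "pmap (2 ^ k) n f"
  shows "\<phi> n (gact HZ (2 ^ k) n f (gpow HZ pm1 k)) = gact R (2 ^ k) n f (gpow R (\<phi> 2 pm1) k)"
  using mult_map_act[OF assms(1) f HZ.power_in] mult_map_gpow[OF assms(1)] by simp

lemma mult_map_determined: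
  assumes \<phi>: "\<phi> \<in> mult_maps HZ R" and \<psi>: "\<psi> \<in> mult_maps HZ R" and eq: "\<phi> 2 pm1 = \<psi> 2 pm1"
  shows "\<phi> = \<psi>"
proof (intro ext)
  fix n a
  show "\<phi> n a = \<psi> n a"
  proof (cases "a \<in> gobj HZ n")
    case True
    then obtain k f where f: "pmap (2 ^ k) n f" and a: "a = gact HZ (2 ^ k) n f (gpow HZ pm1 k)"
      using HZ_generated gpow_HZ_pm1 by metis
    show ?thesis
      unfolding a mult_map_act_power[OF \<phi> f] mult_map_act_power[OF \<psi> f] eq ..
  next
    case False
    then show ?thesis using mult_map_out[OF \<phi>] mult_map_out[OF \<psi>] by simp
  qed
qed

lemma mult_map_deletion:
  assumes \<phi>: "\<phi> \<in> mult_maps HZ R" and ij: "1 \<le> i" "i < j" "j \<le> N" and l: "1 \<le> l" "l \<le> N - 1"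
    and x: "x \<in> gobj HZ N"
  shows "\<phi> (N - 1) (gact HZ (N - 2) (N - 1) (d_map (N - 1) l)
            (gact HZ (N - 1) (N - 2) (p_map (N - 1) i) (gact HZ N (N - 1) (p_map N j) x)))
       = gact R (N - 2) (N - 1) (d_map (N - 1) l)
            (gact R (N - 1) (N - 2) (p_map (N - 1) i) (gact R N (N - 1) (p_map N j) (\<phi> N x)))"
proof -
  have N: "N - 1 - 1 = N - 2" by simp
  have pj: "pmap N (N - 1) (p_map N j)" using pmap_p_map ij by simp
  have pi: "pmap (N - 1) (N - 2) (p_map (N - 1) i)" using pmap_p_map[of i "N - 1"] ij N by simp
  have pd: "pmap (N - 2) (N - 1) (d_map (N - 1) l)" using pmap_d_map[of l "N - 1"] l N by simp
  have x1: "gact HZ N (N - 1) (p_map N j) x \<in> gobj HZ (N - 1)" using HZ.act_in[OF pj x] .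
  have x2: "gact HZ (N - 1) (N - 2) (p_map (N - 1) i) (gact HZ N (N - 1) (p_map N j) x) \<in> gobj HZ (N - 2)"
    using HZ.act_in[OF pi x1] .
  show ?thesis
    using mult_map_act[OF \<phi> pd x2] mult_map_act[OF \<phi> pi x1] mult_map_act[OF \<phi> pj x] by simp
qed

text \<open>Multiplicative maps preserve formal difference laws: all conditions are equations
  between actions and products of (1,-1) and its powers.\<close>
lemma mult_map_difference_law:
  assumes \<phi>: "\<phi> \<in> mult_maps HZ R"
  shows "formal_difference_law R (\<phi> 2 pm1)"
  unfolding formal_difference_law_def
proof (intro conjI allI impI)
  have p22: "pmap 2 1 (p_map 2 2)" and p21: "pmap 2 1 (p_map 2 1)"
    and s121: "pmap 2 1 (s_map 2 1 2 1)" and sw: "pmap 2 2 swap12"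
    by (auto simp: pmap_def p_map_def s_map_def swap12_def)
  let ?r = "\<phi> 2 pm1"
  note HZ_law = HZ_difference_law[unfolded formal_difference_law_def]
  have p1: "gact HZ 2 1 (p_map 2 1) pm1 \<in> gobj HZ 1" using HZ.act_in[OF p21 HZ.law_in] .
  have act: "\<phi> 1 (gact HZ 2 1 g pm1) = gact R 2 1 g ?r" if "pmap 2 1 g" for g
    using mult_map_act[OF \<phi> that HZ.law_in] .
  show "?r \<in> gobj R 2" using mult_map_in[OF \<phi> HZ.law_in] .
  show "gact R 2 1 (p_map 2 2) ?r = gunit R"
    using act[OF p22] HZ_law mult_map_unit[OF \<phi>] by simp
  show "gact R 2 1 (s_map 2 1 2 1) ?r = gbp R 1"
    using act[OF s121] HZ_law mult_map_bp[OF \<phi>] by simp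
  show "gmult R 1 2 (gact R 2 1 (p_map 2 1) ?r) ?r = gact R 2 2 swap12 ?r"
    using mult_map_mult[OF \<phi> p1 HZ.law_in] act[OF p21] HZ_law mult_map_act[OF \<phi> sw HZ.law_in]
    by simp
  show "gmult R 2 1 ?r (gact R 2 1 (p_map 2 1) ?r) = gact R 2 2 swap12 ?r"
    using mult_map_mult[OF \<phi> HZ.law_in p1] act[OF p21] HZ_law mult_map_act[OF \<phi> sw HZ.law_in]
    by simp
next
  fix k :: nat and \<pi>
  assume "1 \<le> k" and "\<pi> permutes {1..2 ^ k} \<and> \<pi> ` Aplus k \<subseteq> Aplus k \<and> \<pi> ` Aminus k \<subseteq> Aminus k"
  moreover from this have "pmap (2 ^ k) (2 ^ k) \<pi>"
    unfolding pmap_def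
    by (metis atLeastAtMost_iff le0 not_one_le_zero permutes_in_image permutes_not_in)
  ultimately show "gact R (2 ^ k) (2 ^ k) \<pi> (gpow R (\<phi> 2 pm1) k) = gpow R (\<phi> 2 pm1) k"
    using HZ.law_class_invariant mult_map_act_power[OF \<phi>] mult_map_gpow[OF \<phi>] by metis
next
  fix k i j l :: nat
  assume k: "1 \<le> k" and h: "1 \<le> i \<and> i < j \<and> j \<le> 2 ^ k \<and>
        (i \<in> Aplus k \<and> j \<in> Aminus k \<or> i \<in> Aminus k \<and> j \<in> Aplus k) \<and> 1 \<le> l \<and> l \<le> 2 ^ k - 1"
  have ps: "pmap (2 ^ k) (2 ^ k - 1) (s_map (2 ^ k) i j l)"
    using h by (intro pmap_s_map) simp_all
  have "gact R (2 ^ k) (2 ^ k - 1) (s_map (2 ^ k) i j l) (gpow R (\<phi> 2 pm1) k)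
      = \<phi> (2 ^ k - 1) (gact HZ (2 ^ k) (2 ^ k - 1) (s_map (2 ^ k) i j l) (gpow HZ pm1 k))"
    using mult_map_act_power[OF \<phi> ps] by simp
  also have "\<dots> = \<phi> (2 ^ k - 1) (gact HZ (2 ^ k - 2) (2 ^ k - 1) (d_map (2 ^ k - 1) l)
          (gact HZ (2 ^ k - 1) (2 ^ k - 2) (p_map (2 ^ k - 1) i)
            (gact HZ (2 ^ k) (2 ^ k - 1) (p_map (2 ^ k) j) (gpow HZ pm1 k))))"
    using HZ.law_deletion k h by simp
  also have "\<dots> = gact R (2 ^ k - 2) (2 ^ k - 1) (d_map (2 ^ k - 1) l)
          (gact R (2 ^ k - 1) (2 ^ k - 2) (p_map (2 ^ k - 1) i)
            (gact R (2 ^ k) (2 ^ k - 1) (p_map (2 ^ k) j) (\<phi> (2 ^ k) (gpow HZ pm1 k))))"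
    by (rule mult_map_deletion[OF \<phi> _ _ _ _ _ HZ.power_in]) (use h in simp_all)
  also have "\<dots> = gact R (2 ^ k - 2) (2 ^ k - 1) (d_map (2 ^ k - 1) l)
          (gact R (2 ^ k - 1) (2 ^ k - 2) (p_map (2 ^ k - 1) i)
            (gact R (2 ^ k) (2 ^ k - 1) (p_map (2 ^ k) j) (gpow R (\<phi> 2 pm1) k)))"
    using mult_map_gpow[OF \<phi>, of k] by simp
  finally show "gact R (2 ^ k) (2 ^ k - 1) (s_map (2 ^ k) i j l) (gpow R (\<phi> 2 pm1) k)
      = gact R (2 ^ k - 2) (2 ^ k - 1) (d_map (2 ^ k - 1) l)
          (gact R (2 ^ k - 1) (2 ^ k - 2) (p_map (2 ^ k - 1) i)
            (gact R (2 ^ k) (2 ^ k - 1) (p_map (2 ^ k) j) (gpow R (\<phi> 2 pm1) k)))" .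
qed

definition support_size :: "nat \<Rightarrow> (nat \<Rightarrow> nat) \<Rightarrow> nat" where
  "support_size N f = card {x\<in>{1..N}. f x \<noteq> 0}"

definition disagreement :: "nat \<Rightarrow> (nat \<Rightarrow> nat) \<Rightarrow> (nat \<Rightarrow> nat) \<Rightarrow> nat" where
  "disagreement N f g = card {x\<in>{1..N}. f x \<noteq> g x}"

definition sign_reduced :: "nat \<Rightarrow> (nat \<Rightarrow> nat) \<Rightarrow> bool" where
  "sign_reduced k f \<longleftrightarrow>
     (\<forall>i\<in>{1..2 ^ k}. \<forall>j\<in>{1..2 ^ k}. f i = f j \<and> f i \<noteq> 0 \<longrightarrow> sign_vec k i = sign_vec k j)"

lemma disagreement_sym: "disagreement N f g = disagreement N g f"
  unfolding disagreement_def by (rule arg_cong[where f = card]) auto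

lemma sign_reduced_fibre_sum:
  assumes "sign_reduced k f" "x \<in> {1..2 ^ k}" "f x = t" "t \<noteq> 0"
  shows "(\<Sum>z\<in>{z\<in>{1..2 ^ k}. f z = t}. sign_vec k z)
       = of_nat (card {z\<in>{1..2 ^ k}. f z = t}) * sign_vec k x"
proof -
  have "sign_vec k z = sign_vec k x" if "z \<in> {z\<in>{1..2 ^ k}. f z = t}" for z
    using assms(1)[unfolded sign_reduced_def, rule_format, of z x] that assms(2-4) by simp
  then show ?thesis by simp
qed

lemma sign_reduced_fibre_match:
  assumes f: "pmap (2 ^ k) n f" and rf: "sign_reduced k f" and rg: "sign_reduced k g"
    and hz: "gact HZ (2 ^ k) n f (sign_vec k) = gact HZ (2 ^ k) n g (sign_vec k)"
    and x: "x \<in> {1..2 ^ k}" and fx: "f x \<noteq> 0" and gx: "g x \<noteq> f x"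
  shows "\<exists>y\<in>{1..2 ^ k}. g y = f x \<and> f y \<noteq> f x \<and> sign_vec k y = sign_vec k x"
proof -
  define t where "t = f x"
  define F where "F = {z\<in>{1..2 ^ k}. f z = t}"
  define G where "G = {z\<in>{1..2 ^ k}. g z = t}"
  have "t \<le> n" using f x by (auto simp: pmap_def t_def)
  then have sums: "(\<Sum>z\<in>F. sign_vec k z) = (\<Sum>z\<in>G. sign_vec k z)"
    using fun_cong[OF hz, of t] fx by (simp add: HZ_simps F_def G_def t_def)
  have sF: "(\<Sum>z\<in>F. sign_vec k z) = of_nat (card F) * sign_vec k x"
    using sign_reduced_fibre_sum[OF rf x] fx unfolding F_def t_def by simp
  have sG: "(\<Sum>z\<in>G. sign_vec k z) = of_nat (card G) * sign_vec k w" if "w \<in> G" for w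
    using sign_reduced_fibre_sum[OF rg, of w t] that fx unfolding G_def t_def by simp
  have xF: "x \<in> F" and fin: "finite F" "finite G" and "x \<notin> G"
    using x gx by (simp_all add: F_def G_def t_def)
  have cF: "card F \<ge> 1" using xF fin by (metis One_nat_def Suc_leI card_gt_0_iff empty_iff)
  have sx: "sign_vec k x = 1 \<or> sign_vec k x = -1" using sign_vec_cases[OF x] .
  have "\<exists>y\<in>G. f y \<noteq> t"
  proof (rule ccontr)
    assume "\<not> (\<exists>y\<in>G. f y \<noteq> t)"
    then have "G \<subset> F" using xF \<open>x \<notin> G\<close> by (auto simp: F_def G_def)
    then have "card G < card F" using fin by (simp add: psubset_card_mono)
    moreover have "of_nat (card G) * sign_vec k x = of_nat (card F) * sign_vec k x"
    proof (cases "G = {}")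
      case False
      then obtain w where w: "w \<in> G" by auto
      then have "w \<in> {1..2 ^ k}" "f w = f x"
        using \<open>G \<subset> F\<close> by (auto simp: F_def t_def)
      then have "sign_vec k w = sign_vec k x"
        using rf[unfolded sign_reduced_def, rule_format, of w x] x fx by simp
      then show ?thesis using sums sF sG[OF w] by auto
    qed (use sums sF in simp)
    ultimately show False using sx by (elim disjE) simp_all
  qed
  then obtain y where y: "y \<in> G" "f y \<noteq> t" by blast
  have "card G \<ge> 1" using y fin by (metis One_nat_def Suc_leI card_gt_0_iff empty_iff)
  moreover have "of_nat (card G) * sign_vec k y = of_nat (card F) * sign_vec k x"
    using sums sF sG[OF y(1)] by simp
  moreover have "sign_vec k y = 1 \<or> sign_vec k y = -1"
    using y sign_vec_cases by (auto simp: G_def)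
  ultimately have "sign_vec k y = sign_vec k x" using sx cF by (elim disjE) simp_all
  then show ?thesis using y by (auto simp: G_def t_def)
qed

context difference_law
begin

text \<open>Every map can be made sign-reduced by cancelling pairs of opposite sign in a common
  fibre, without changing its action on r^k nor on (1,-1)^k.\<close>
lemma sign_reduction:
  "pmap (2 ^ k) n f \<Longrightarrow> \<exists>f0. pmap (2 ^ k) n f0 \<and> sign_reduced k f0
     \<and> gact R (2 ^ k) n f0 (gpow R r k) = gact R (2 ^ k) n f (gpow R r k)
     \<and> gact HZ (2 ^ k) n f0 (sign_vec k) = gact HZ (2 ^ k) n f (sign_vec k)"
proof (induction "support_size (2 ^ k) f" arbitrary: f rule: less_induct)
  case less
  show ?case
  proof (cases "sign_reduced k f")
    case True
    then show ?thesis using less.prems by blast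
  next
    case False
    then obtain i j where ij: "i \<in> {1..2 ^ k}" "j \<in> {1..2 ^ k}" "i < j" "f i = f j" "f i \<noteq> 0"
        "sign_vec k i \<noteq> sign_vec k j"
      unfolding sign_reduced_def by (metis linorder_neqE_nat)
    define f' where "f' = (\<lambda>x. if x = i \<or> x = j then 0 else f x)"
    have "pmap (2 ^ k) n f'" using less.prems by (simp add: pmap_def f'_def)
    moreover have "gact R (2 ^ k) n f' (gpow R r k) = gact R (2 ^ k) n f (gpow R r k)"
      using act_merge_opposite[OF less.prems, of i j] ij by (simp add: f'_def)
    moreover have "gact HZ (2 ^ k) n f' (sign_vec k) = gact HZ (2 ^ k) n f (sign_vec k)"
      using HZ.act_merge_opposite[OF less.prems, of i j] ij by (simp add: f'_def gpow_HZ_pm1)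
    moreover have "support_size (2 ^ k) f' < support_size (2 ^ k) f"
    proof -
      have "{x\<in>{1..2 ^ k}. f' x \<noteq> 0} \<subseteq> {x\<in>{1..2 ^ k}. f x \<noteq> 0} - {i}"
        by (auto simp: f'_def)
      then have "support_size (2 ^ k) f' \<le> card ({x\<in>{1..2 ^ k}. f x \<noteq> 0} - {i})"
        unfolding support_size_def by (simp add: card_mono)
      also have "\<dots> < support_size (2 ^ k) f"
        unfolding support_size_def using ij by (intro card_Diff1_less) auto
      finally show ?thesis .
    qed
    ultimately show ?thesis using less.hyps[of f'] by auto
  qed
qed

lemma transpose_same_sign:
  assumes g: "pmap (2 ^ k) n g" and rg: "sign_reduced k g"
    and x: "x \<in> {1..2 ^ k}" and y: "y \<in> {1..2 ^ k}" and s: "sign_vec k x = sign_vec k y"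
  shows "pmap (2 ^ k) n (g \<circ> transpose x y)" and "sign_reduced k (g \<circ> transpose x y)"
    and "gact R (2 ^ k) n (g \<circ> transpose x y) (gpow R r k) = gact R (2 ^ k) n g (gpow R r k)"
    and "gact HZ (2 ^ k) n (g \<circ> transpose x y) (sign_vec k) = gact HZ (2 ^ k) n g (sign_vec k)"
proof -
  let ?t = "transpose x y"
  have t: "?t z \<in> {1..2 ^ k} \<longleftrightarrow> z \<in> {1..2 ^ k}" "sign_vec k (?t z) = sign_vec k z" for z
    using x y s by (auto simp: transpose_def)
  show "pmap (2 ^ k) n (g \<circ> ?t)"
    using g x y unfolding pmap_def by (auto simp: transpose_def)
  show "sign_reduced k (g \<circ> ?t)"
    unfolding sign_reduced_def
  proof (intro ballI impI)
    fix i j assume "i \<in> {1..2 ^ k}" "j \<in> {1..2 ^ k}" "(g \<circ> ?t) i = (g \<circ> ?t) j \<and> (g \<circ> ?t) i \<noteq> 0"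
    then show "sign_vec k i = sign_vec k j"
      using rg[unfolded sign_reduced_def, rule_format, of "?t i" "?t j"] t by simp
  qed
  show "gact R (2 ^ k) n (g \<circ> ?t) (gpow R r k) = gact R (2 ^ k) n g (gpow R r k)"
    by (rule act_transpose_same_sign[OF x y s g])
  show "gact HZ (2 ^ k) n (g \<circ> ?t) (sign_vec k) = gact HZ (2 ^ k) n g (sign_vec k)"
    using HZ.act_transpose_same_sign[OF x y s g] by (simp add: gpow_HZ_pm1)
qed

lemma disagreement_decrease:
  assumes x: "x \<in> {1..N}" and y: "y \<in> {1..N}" and gy: "g y = f x" and gx: "g x \<noteq> f x"
    and fy: "f y \<noteq> f x"
  shows "disagreement N f (g \<circ> transpose x y) < disagreement N f g"
proof -
  have "{z\<in>{1..N}. f z \<noteq> (g \<circ> transpose x y) z} \<subseteq> {z\<in>{1..N}. f z \<noteq> g z} - {x}"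
    using gy fy by (auto simp: transpose_def)
  then have "disagreement N f (g \<circ> transpose x y) \<le> card ({z\<in>{1..N}. f z \<noteq> g z} - {x})"
    unfolding disagreement_def by (simp add: card_mono)
  also have "\<dots> < disagreement N f g"
    unfolding disagreement_def using x gx by (intro card_Diff1_less) auto
  finally show ?thesis .
qed

lemma sign_reduced_act_eq:
  "pmap (2 ^ k) n f \<Longrightarrow> pmap (2 ^ k) n g \<Longrightarrow> sign_reduced k f \<Longrightarrow> sign_reduced k g
   \<Longrightarrow> gact HZ (2 ^ k) n f (sign_vec k) = gact HZ (2 ^ k) n g (sign_vec k)
   \<Longrightarrow> gact R (2 ^ k) n f (gpow R r k) = gact R (2 ^ k) n g (gpow R r k)"
proof (induction "disagreement (2 ^ k) f g" arbitrary: f g rule: less_induct)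
  case less
  note f = less.prems(1) and g = less.prems(2) and rf = less.prems(3) and rg = less.prems(4)
    and hz = less.prems(5)
  have step: "gact R (2 ^ k) n f' (gpow R r k) = gact R (2 ^ k) n g' (gpow R r k)"
    if fg: "f' = f \<and> g' = g \<or> f' = g \<and> g' = f"
      and x: "x \<in> {1..2 ^ k}" and fx: "f' x \<noteq> 0" and gx: "g' x \<noteq> f' x" for f' g' x
  proof -
    have f': "pmap (2 ^ k) n f'" "pmap (2 ^ k) n g'" "sign_reduced k f'" "sign_reduced k g'"
      and hz': "gact HZ (2 ^ k) n f' (sign_vec k) = gact HZ (2 ^ k) n g' (sign_vec k)"
      and d: "disagreement (2 ^ k) f' g' = disagreement (2 ^ k) f g"
      using fg f g rf rg hz disagreement_sym by auto
    obtain y where y: "y \<in> {1..2 ^ k}" "g' y = f' x" "f' y \<noteq> f' x" "sign_vec k y = sign_vec k x"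
      using sign_reduced_fibre_match[OF f'(1,3,4) hz' x fx gx] by blast
    note t = transpose_same_sign[OF f'(2,4) x y(1) y(4)[symmetric]]
    have "disagreement (2 ^ k) f' (g' \<circ> transpose x y) < disagreement (2 ^ k) f g"
      using disagreement_decrease[OF x y(1,2) gx y(3)] d by simp
    then have "gact R (2 ^ k) n f' (gpow R r k) = gact R (2 ^ k) n (g' \<circ> transpose x y) (gpow R r k)"
      using less.hyps[OF _ f'(1) t(1) f'(3) t(2)] t(4) hz' by simp
    then show ?thesis using t(3) by simp
  qed
  show ?case
  proof (cases "\<forall>x\<in>{1..2 ^ k}. f x = g x")
    case True
    have "f i = g i" if "i \<le> 2 ^ k" for i
      using True f g that by (cases "i = 0") (auto simp: pmap_def)
    then show ?thesis by (rule act_cong[OF f _ power_in])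
  next
    case False
    then obtain x where x: "x \<in> {1..2 ^ k}" "f x \<noteq> g x" by blast
    then show ?thesis
      using step[of f g x] step[of g f x] by (cases "f x = 0") auto
  qed
qed

text \<open>Well-definedness: two maps with the same image of (1,-1)-powers in HZ have the same
  action on the powers of r.  Stabilize to a common level, make both sign-reduced,
  and compare.\<close>
lemma act_well_defined:
  assumes f: "pmap (2 ^ k) n f" and g: "pmap (2 ^ l) n g"
    and hz: "gact HZ (2 ^ k) n f (sign_vec k) = gact HZ (2 ^ l) n g (sign_vec l)"
  shows "gact R (2 ^ k) n f (gpow R r k) = gact R (2 ^ l) n g (gpow R r l)"
proof -
  have same_level: "gact R (2 ^ m) n f' (gpow R r m) = gact R (2 ^ m) n g' (gpow R r m)"
    if f': "pmap (2 ^ m) n f'" and g': "pmap (2 ^ m) n g'"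
      and eq: "gact HZ (2 ^ m) n f' (sign_vec m) = gact HZ (2 ^ m) n g' (sign_vec m)" for m f' g'
  proof -
    obtain f0 where "pmap (2 ^ m) n f0" "sign_reduced m f0"
      "gact R (2 ^ m) n f0 (gpow R r m) = gact R (2 ^ m) n f' (gpow R r m)"
      "gact HZ (2 ^ m) n f0 (sign_vec m) = gact HZ (2 ^ m) n f' (sign_vec m)"
      using sign_reduction[OF f'] by blast
    moreover obtain g0 where "pmap (2 ^ m) n g0" "sign_reduced m g0"
      "gact R (2 ^ m) n g0 (gpow R r m) = gact R (2 ^ m) n g' (gpow R r m)"
      "gact HZ (2 ^ m) n g0 (sign_vec m) = gact HZ (2 ^ m) n g' (sign_vec m)"
      using sign_reduction[OF g'] by blast
    ultimately show ?thesis
      using sign_reduced_act_eq[of m n f0 g0] eq by simp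
  qed
  have lower: "gact R (2 ^ k') n f' (gpow R r k') = gact R (2 ^ l') n g' (gpow R r l')"
    if kl: "k' \<le> l'" and f': "pmap (2 ^ k') n f'" and g': "pmap (2 ^ l') n g'"
      and eq: "gact HZ (2 ^ k') n f' (sign_vec k') = gact HZ (2 ^ l') n g' (sign_vec l')" for k' l' f' g'
  proof -
    obtain m where l': "l' = k' + m" using kl le_Suc_ex by blast
    let ?f = "\<lambda>x. if x \<le> 2 ^ k' then f' x else 0"
    have "pmap (2 ^ l') n ?f" using f' by (auto simp: pmap_def)
    moreover have "gact HZ (2 ^ l') n ?f (sign_vec l') = gact HZ (2 ^ l') n g' (sign_vec l')"
      using HZ.act_power_stable[OF f', of m] eq l' by (simp add: gpow_HZ_pm1)
    ultimately have "gact R (2 ^ l') n ?f (gpow R r l') = gact R (2 ^ l') n g' (gpow R r l')"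
      using same_level g' by blast
    then show ?thesis using act_power_stable[OF f', of m] l' by simp
  qed
  show ?thesis
    using lower[OF _ f g hz] lower[OF _ g f hz[symmetric]] by (cases "k \<le> l") auto
qed

end

text \<open>The multiplicative map induced by a formal difference law r: it sends
  f_*((1,-1)^k) to f_*(r^k), which is well defined by act_well_defined.\<close>
definition induced_map :: "'a gamma_ring \<Rightarrow> 'a \<Rightarrow> nat \<Rightarrow> (nat \<Rightarrow> int) \<Rightarrow> 'a" where
  "induced_map R r n a = (if a \<in> gobj HZ n then
      (SOME y. \<exists>k f. pmap (2 ^ k) n f \<and> a = gact HZ (2 ^ k) n f (sign_vec k)
                   \<and> y = gact R (2 ^ k) n f (gpow R r k))
     else undefined)"

context difference_law
begin

lemma induced_map_eq:
  assumes f: "pmap (2 ^ k) n f"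
  shows "induced_map R r n (gact HZ (2 ^ k) n f (sign_vec k)) = gact R (2 ^ k) n f (gpow R r k)"
proof -
  let ?a = "gact HZ (2 ^ k) n f (sign_vec k)"
  have "\<exists>y k f. pmap (2 ^ k) n f \<and> ?a = gact HZ (2 ^ k) n f (sign_vec k) \<and> y = gact R (2 ^ k) n f (gpow R r k)"
    using f by blast
  from someI_ex[OF this] obtain k' f' where
    "pmap (2 ^ k') n f'" "?a = gact HZ (2 ^ k') n f' (sign_vec k')"
    "induced_map R r n ?a = gact R (2 ^ k') n f' (gpow R r k')"
    using HZ.act_in[OF f sign_vec_in] unfolding induced_map_def by auto
  then show ?thesis using act_well_defined[OF _ f] by metis
qed

lemma induced_map_gen:
  assumes "a \<in> gobj HZ n"
  obtains k f where "pmap (2 ^ k) n f" "a = gact HZ (2 ^ k) n f (sign_vec k)"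
    "induced_map R r n a = gact R (2 ^ k) n f (gpow R r k)"
  using HZ_generated[OF assms] induced_map_eq by metis

lemma induced_map_power: "induced_map R r (2 ^ k) (gpow HZ pm1 k) = gpow R r k"
  using induced_map_eq[of k "2 ^ k" "\<lambda>i. i"] HZ.act_id[OF sign_vec_in] act_id[OF power_in]
  by (simp add: pmap_def gpow_HZ_pm1)

lemma induced_map_pm1: "induced_map R r 2 pm1 = r"
  using induced_map_power[of 1] HZ.gpow_one[OF HZ.law_in] gpow_one[OF law_in] by simp

lemma induced_map_in: "a \<in> gobj HZ n \<Longrightarrow> induced_map R r n a \<in> gobj R n"
  using act_in power_in by (metis induced_map_gen)

text \<open>The basepoint 0 of HZ[n] is the image of the unit under [1] -> [0] -> [n], and so
  is the basepoint of R[n].\<close>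
lemma induced_map_bp: "induced_map R r n (gbp HZ n) = gbp R n"
proof -
  have zero: "pmap (2 ^ 0) n (\<lambda>_. 0)" "pmap 1 0 (\<lambda>_. 0)" "pmap 0 n (\<lambda>_. 0)"
    by (simp_all add: pmap_def)
  have "gbp HZ n = gact HZ (2 ^ 0) n (\<lambda>_. 0) (sign_vec 0)" by (auto simp: HZ_simps)
  then have "induced_map R r n (gbp HZ n) = gact R 1 n (\<lambda>_. 0) (gunit R)"
    using induced_map_eq[OF zero(1)] by simp
  also have "\<dots> = gact R 0 n (\<lambda>_. 0) (gact R 1 0 (\<lambda>_. 0) (gunit R))"
    using act_comp[OF zero(2,3) unit_in] by (simp add: o_def)
  also have "\<dots> = gbp R n"
    using act_in[OF zero(2) unit_in] obj_zero act_bp[OF zero(3)] by simp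
  finally show ?thesis .
qed

lemma induced_map_natural:
  assumes g: "pmap n m g" and a: "a \<in> gobj HZ n"
  shows "induced_map R r m (gact HZ n m g a) = gact R n m g (induced_map R r n a)"
proof -
  obtain k f where f: "pmap (2 ^ k) n f" "a = gact HZ (2 ^ k) n f (sign_vec k)"
    "induced_map R r n a = gact R (2 ^ k) n f (gpow R r k)"
    using induced_map_gen[OF a] by blast
  have "gact HZ n m g a = gact HZ (2 ^ k) m (g \<circ> f) (sign_vec k)"
    using HZ_act_comp[OF f(1) g] f(2) by simp
  then show ?thesis
    using induced_map_eq[OF pmap_comp[OF f(1) g]] act_comp[OF f(1) g power_in] f(3) by simp
qed

text \<open>Multiplicativity: f_*(r^k) g_*(r^l) = (f /\ g)_*(r^(k+l)), and likewise in HZ.\<close>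
lemma induced_map_mult:
  assumes "a \<in> gobj HZ n" "b \<in> gobj HZ m"
  shows "induced_map R r (n * m) (gmult HZ n m a b) = gmult R n m (induced_map R r n a) (induced_map R r m b)"
proof -
  obtain k f l g where f: "pmap (2 ^ k) n f" "a = gact HZ (2 ^ k) n f (sign_vec k)"
      "induced_map R r n a = gact R (2 ^ k) n f (gpow R r k)"
    and g: "pmap (2 ^ l) m g" "b = gact HZ (2 ^ l) m g (sign_vec l)"
      "induced_map R r m b = gact R (2 ^ l) m g (gpow R r l)"
    using induced_map_gen[OF assms(1)] induced_map_gen[OF assms(2)] by metis
  define h where "h = smash_map (2 ^ k) n f g"
  have ph: "pmap (2 ^ (k + l)) (n * m) h"
    using pmap_smash[OF f(1) g(1)] by (simp add: h_def power_add)
  have "gmult HZ n m a b = gact HZ (2 ^ (k + l)) (n * m) h (sign_vec (k + l))"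
    using HZ.mult_natural[OF f(1) g(1) sign_vec_in sign_vec_in] f(2) g(2)
      HZ.gpow_add[OF HZ.law_in, of k l]
    by (simp add: h_def gpow_HZ_pm1 power_add)
  then have "induced_map R r (n * m) (gmult HZ n m a b) = gact R (2 ^ (k + l)) (n * m) h (gpow R r (k + l))"
    using induced_map_eq[OF ph] by simp
  also have "\<dots> = gmult R n m (gact R (2 ^ k) n f (gpow R r k)) (gact R (2 ^ l) m g (gpow R r l))"
    using mult_natural[OF f(1) g(1) power_in power_in] gpow_add[OF law_in, of k l]
    by (simp add: h_def power_add)
  finally show ?thesis using f(3) g(3) by simp
qed

lemma induced_map_mult_map: "induced_map R r \<in> mult_maps HZ R"
  unfolding mult_maps_def
  using induced_map_in induced_map_bp induced_map_natural induced_map_mult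
    induced_map_power[of 0]
  by (auto simp: induced_map_def)

lemma induced_map_unique:
  assumes \<psi>: "\<psi> \<in> mult_maps HZ R" and powers: "\<And>n. \<psi> (2 ^ n) (gpow HZ pm1 n) = gpow R r n"
  shows "\<psi> = induced_map R r"
proof -
  have "\<psi> 2 pm1 = r"
    using powers[of 1] HZ.gpow_one[OF HZ.law_in] gpow_one[OF law_in] by simp
  then show ?thesis
    using mult_map_determined[OF \<psi> induced_map_mult_map] induced_map_pm1 by simp
qed

end

lemma difference_lawI: "is_gamma_ring R \<Longrightarrow> formal_difference_law R r \<Longrightarrow> difference_law R r"
  by (simp add: difference_law_def difference_law_axioms_def discrete_gamma_ring_def)

theorem mainTheorem6:
  fixes R :: "'a gamma_ring"
  assumes "is_gamma_ring R"
  shows "(\<forall>\<phi>\<in>mult_maps HZ R. formal_difference_law R (\<phi> 2 pm1))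
       \<and> bij_betw (\<lambda>\<phi>. \<phi> 2 pm1) (mult_maps HZ R) {r. formal_difference_law R r}
       \<and> (\<forall>r. formal_difference_law R r \<longrightarrow>
            (\<exists>!\<phi>. \<phi> \<in> mult_maps HZ R \<and> (\<forall>n. \<phi> (2 ^ n) (gpow HZ pm1 n) = gpow R r n)))"
proof (intro conjI ballI allI impI)
  note law = difference_lawI[OF assms]
  show "formal_difference_law R (\<phi> 2 pm1)" if "\<phi> \<in> mult_maps HZ R" for \<phi>
    using mult_map_difference_law[OF that] .
  have "inj_on (\<lambda>\<phi>. \<phi> 2 pm1) (mult_maps HZ R)"
    using mult_map_determined by (intro inj_onI) blast
  moreover have "r \<in> (\<lambda>\<phi>. \<phi> 2 pm1) ` mult_maps HZ R" if "formal_difference_law R r" for r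
    using difference_law.induced_map_mult_map[OF law[OF that]]
      difference_law.induced_map_pm1[OF law[OF that]] by (metis rev_image_eqI)
  ultimately show "bij_betw (\<lambda>\<phi>. \<phi> 2 pm1) (mult_maps HZ R) {r. formal_difference_law R r}"
    using mult_map_difference_law by (auto simp: bij_betw_def)
  fix r assume "formal_difference_law R r"
  then interpret difference_law R r by (rule law)
  show "\<exists>!\<phi>. \<phi> \<in> mult_maps HZ R \<and> (\<forall>n. \<phi> (2 ^ n) (gpow HZ pm1 n) = gpow R r n)"
    using induced_map_mult_map induced_map_power induced_map_unique by blast
qed

end
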